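(* Consider an electrical circuit, modeled as described in the context, whose incremental resistance and conductance matrices $R$ and $G$ are positive definite. An equilibrium point of this circuit is regular if and only if (i) the elastances $E_m$, $E_c$ of $q$-memristors and capacitors and the reluctances $\mathcal{R}_w$, $\mathcal{R}_l$ of $\varphi$-memristors and inductors are non-singular at the equilibrium, and (ii) the circuit has neither VLW-loops nor ICM-cutsets.
   Context: Circuit setting. The circuit has an underlying digraph $\mathcal{G}$ with $n$ nodes, $m$ branches and $k$ connected components. A cutset is a set of branches whose removal increases the number of connected components and which is minimal with this property; a loop is a cycle of branches. Let $B$ be a reduced loop matrix (full-row-rank set of rows of the loop matrix, entries $1,-1,0$ according as a branch is in a loop with the same orientation, opposite orientation, or not at all) and $D$ a reduced cutset matrix (analogous with oriented cutsets), with columns in the same branch order. Each branch carries a voltage $v$ and current $i$ and belongs to one of eight classes. $q$-devices ($v=\eta(q,i,t)$, $C^1$): $q$-memristors $v_m=\eta_1(q_m,i_m,t)$ (with $\partial\eta_1/\partial q_m\not\equiv0$, $\partial\eta_1/\partial i_m\not\equiv0$), capacitors $v_c=\eta_2(q_c,t)$, current-controlled resistors $v_r=\eta_3(i_r,t)$, voltage sources $v_u=\eta_4(t)$. $\varphi$-devices ($i=\zeta(\varphi,v,t)$, $C^1$): $\varphi$-memristors $i_w=\zeta_1(\varphi_w,v_w,t)$ (with $\partial\zeta_1/\partial\varphi_w\not\equiv0$, $\partial\zeta_1/\partial v_w\not\equiv0$), inductors $i_l=\zeta_2(\varphi_l,t)$, voltage-controlled resistors $i_g=\zeta_3(v_g,t)$,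 current sources $i_j=\zeta_4(t)$. Maps may be vector-valued. With $B=(B_q\ B_\varphi)$, $D=(D_q\ D_\varphi)$ split by $q$- and $\varphi$-devices, and $q_{mc}=(q_m,q_c)$, $\varphi_{wl}=(\varphi_w,\varphi_l)$, the circuit is modeled by the semiexplicit differential-algebraic system $q_{mc}'=i_{mc}$, $\varphi_{wl}'=v_{wl}$, $0=v_q-f(q_{mc},i_q,t)$, $0=i_\varphi-g(\varphi_{wl},v_\varphi,t)$, $0=B_qv_q+B_\varphi v_\varphi$, $0=D_qi_q+D_\varphi i_\varphi$, where $f$ collects $\eta_1,\dots,\eta_4$ and $g$ collects $\zeta_1,\dots,\zeta_4$. An equilibrium point is a point $(q_{mc},\varphi_{wl},v_q,i_q,v_\varphi,i_\varphi)$ at which the right-hand sides of all these equations vanish; it is regular if the Jacobian matrix $K$ of these right-hand sides with respect to $(q_{mc},\varphi_{wl},v_q,i_q,v_\varphi,i_\varphi)$ is non-singular there. Characteristic matrices: resistance $R=\partial\eta_3/\partial i_r$, conductance $G=\partial\zeta_3/\partial v_g$, elastances $E_m=\partial\eta_1/\partial q_m$, $E_c=\partial\eta_2/\partial q_c$, reluctances $\mathcal{R}_w=\partial\zeta_1/\partial\varphi_w$, $\mathcal{R}_l=\partial\zeta_2/\partial\varphi_l$. A square matrix $P$ is positive definite if $u^TPu>0$ for all $u\ne0$ (symmetry not assumed). A VLW-loop is a loop consisting only of voltage sources, inductors and/or $\varphi$-memristors; an ICM-cutset is a cutset consisting only of current sources, capacitors and/or $q$-memristors. *)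

theory Defs
  imports "HOL-Analysis.Analysis"
begin

datatype dev = QMem | Cap | CCR | VSrc | PhiMem | Ind | VCR | ISrc

definition qdev :: "dev \<Rightarrow> bool" where
  "qdev c \<longleftrightarrow> c \<in> {QMem, Cap, CCR, VSrc}"

definition phidev :: "dev \<Rightarrow> bool" where
  "phidev c \<longleftrightarrow> c \<in> {PhiMem, Ind, VCR, ISrc}"

text \<open>The vector-valued maps are represented on the full branch vector space; only the
  components of the relevant class are fed in (all others masked to 0) and only the
  components of the relevant class of the output are used.\<close>

record ('n, 'b) circuit =
  src :: "'b \<Rightarrow> 'n"
  dst :: "'b \<Rightarrow> 'n"
  cls :: "'b \<Rightarrow> dev"
  Bm :: "nat \<Rightarrow> 'b \<Rightarrow> real"
  rB :: nat
  Dm :: "nat \<Rightarrow> 'b \<Rightarrow> real"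
  rD :: nat
  eta1 :: "real^'b \<Rightarrow> real^'b \<Rightarrow> real \<Rightarrow> real^'b"
  eta2 :: "real^'b \<Rightarrow> real \<Rightarrow> real^'b"
  eta3 :: "real^'b \<Rightarrow> real \<Rightarrow> real^'b"
  eta4 :: "real \<Rightarrow> real^'b"
  zeta1 :: "real^'b \<Rightarrow> real^'b \<Rightarrow> real \<Rightarrow> real^'b"
  zeta2 :: "real^'b \<Rightarrow> real \<Rightarrow> real^'b"
  zeta3 :: "real^'b \<Rightarrow> real \<Rightarrow> real^'b"
  zeta4 :: "real \<Rightarrow> real^'b"

definition cset :: "('n, 'b::finite) circuit \<Rightarrow> dev \<Rightarrow> 'b set" where
  "cset C c = {b. cls C b = c}"

text \<open>An (oriented) loop = simple cycle in the underlying undirected multigraph, given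
  by distinct nodes vs!0,...,vs!(k-1) and distinct branches es!j joining vs!j and
  vs!((j+1) mod k); it is traversed in this order.\<close>

definition is_cycle :: "('n, 'b::finite) circuit \<Rightarrow> 'n list \<Rightarrow> 'b list \<Rightarrow> bool" where
  "is_cycle C vs es \<longleftrightarrow> length vs = length es \<and> es \<noteq> [] \<and> distinct vs \<and> distinct es \<and>
     (\<forall>j < length es.
        (src C (es!j) = vs!j \<and> dst C (es!j) = vs!((j+1) mod length es)) \<or>
        (dst C (es!j) = vs!j \<and> src C (es!j) = vs!((j+1) mod length es)))"

definition is_loop :: "('n, 'b::finite) circuit \<Rightarrow> 'b set \<Rightarrow> bool" where
  "is_loop C L \<longleftrightarrow> (\<exists>vs es. is_cycle C vs es \<and> L = set es)"

definition loop_vec :: "('n, 'b::finite) circuit \<Rightarrow> ('b \<Rightarrow> real) \<Rightarrow> bool" where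
  "loop_vec C w \<longleftrightarrow> (\<exists>vs es. is_cycle C vs es \<and>
     w = (\<lambda>b. \<Sum>j<length es. if es!j = b then (if src C b = vs!j then 1 else -1) else 0))"

definition adj :: "('n, 'b::finite) circuit \<Rightarrow> 'b set \<Rightarrow> 'n \<Rightarrow> 'n \<Rightarrow> bool" where
  "adj C E u v \<longleftrightarrow> (\<exists>b\<in>E. (src C b = u \<and> dst C b = v) \<or> (src C b = v \<and> dst C b = u))"

definition ncomp :: "('n::finite, 'b::finite) circuit \<Rightarrow> 'b set \<Rightarrow> nat" where
  "ncomp C E = card {X. \<exists>u. X = {v. (adj C E)\<^sup>*\<^sup>* u v}}"

definition increases_comp :: "('n::finite, 'b::finite) circuit \<Rightarrow> 'b set \<Rightarrow> bool" where
  "increases_comp C S \<longleftrightarrow> ncomp C (UNIV - S) > ncomp C UNIV"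

definition is_cutset :: "('n::finite, 'b::finite) circuit \<Rightarrow> 'b set \<Rightarrow> bool" where
  "is_cutset C S \<longleftrightarrow> increases_comp C S \<and> (\<forall>S'. S' \<subset> S \<longrightarrow> \<not> increases_comp C S')"

definition cutset_vec :: "('n::finite, 'b::finite) circuit \<Rightarrow> ('b \<Rightarrow> real) \<Rightarrow> bool" where
  "cutset_vec C w \<longleftrightarrow> (\<exists>S X. is_cutset C S \<and> S = {b. (src C b \<in> X) \<noteq> (dst C b \<in> X)} \<and>
     w = (\<lambda>b. if b \<in> S then (if src C b \<in> X then 1 else -1) else 0))"

definition reduced_matrix :: "(('b::finite \<Rightarrow> real) \<Rightarrow> bool) \<Rightarrow> (nat \<Rightarrow> 'b \<Rightarrow> real) \<Rightarrow> nat \<Rightarrow> bool" where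
  "reduced_matrix P A r \<longleftrightarrow>
     (\<forall>k<r. P (A k)) \<and>
     (\<forall>c. (\<forall>b. (\<Sum>k<r. c k * A k b) = 0) \<longrightarrow> (\<forall>k<r. c k = 0)) \<and>
     (\<forall>w. P w \<longrightarrow> (\<exists>c. \<forall>b. w b = (\<Sum>k<r. c k * A k b)))"

definition VLW_loop :: "('n, 'b::finite) circuit \<Rightarrow> 'b set \<Rightarrow> bool" where
  "VLW_loop C L \<longleftrightarrow> is_loop C L \<and> (\<forall>b\<in>L. cls C b \<in> {VSrc, Ind, PhiMem})"

definition ICM_cutset :: "('n::finite, 'b::finite) circuit \<Rightarrow> 'b set \<Rightarrow> bool" where
  "ICM_cutset C S \<longleftrightarrow> is_cutset C S \<and> (\<forall>b\<in>S. cls C b \<in> {ISrc, Cap, QMem})"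

definition C1_map :: "('a::real_normed_vector \<Rightarrow> 'c::real_normed_vector) \<Rightarrow> bool" where
  "C1_map f \<longleftrightarrow> (\<exists>D. (\<forall>z. (f has_derivative blinfun_apply (D z)) (at z)) \<and> continuous_on UNIV D)"

definition maskv :: "'b set \<Rightarrow> real^'b \<Rightarrow> real^'b" where
  "maskv S v = (\<chi> b. if b \<in> S then v $ b else 0)"

text \<open>Partial-derivative (Jacobian) matrix of f at z: entry (b,b') = d f_b / d z_b'.\<close>

definition jac :: "(real^'b \<Rightarrow> real^'b) \<Rightarrow> real^'b \<Rightarrow> 'b \<Rightarrow> 'b \<Rightarrow> real" where
  "jac f z b b' = frechet_derivative f (at z) (axis b' 1) $ b"

definition nonsingular :: "'r set \<Rightarrow> 'c set \<Rightarrow> ('r \<Rightarrow> 'c \<Rightarrow> real) \<Rightarrow> bool" where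
  "nonsingular Rw Cl A \<longleftrightarrow> (\<exists>L.
     (\<forall>e\<in>Rw. \<forall>e'\<in>Rw. (\<Sum>u\<in>Cl. A e u * L u e') = (if e = e' then 1 else 0)) \<and>
     (\<forall>u\<in>Cl. \<forall>u'\<in>Cl. (\<Sum>e\<in>Rw. L u e * A e u') = (if u = u' then 1 else 0)))"

definition posdef :: "'b set \<Rightarrow> ('b \<Rightarrow> 'b \<Rightarrow> real) \<Rightarrow> bool" where
  "posdef S A \<longleftrightarrow> (\<forall>u. (\<exists>b\<in>S. u b \<noteq> 0) \<longrightarrow> (\<Sum>b\<in>S. \<Sum>b'\<in>S. u b * A b b' * u b') > 0)"

text \<open>Unknowns: q_b (b a q-memristor or capacitor), phi_b (b a phi-memristor or inductor),
  v_b and i_b for every branch b.\<close>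

datatype 'b cvar = VQ 'b | VPh 'b | VV 'b | VI 'b

text \<open>Equations: q' = i (EQ), phi' = v (EPh), constitutive relations of q-devices (EV)
  and phi-devices (EI), rows of B v = 0 (EB) and of D i = 0 (ED).\<close>

datatype 'b ceq = EQ 'b | EPh 'b | EV 'b | EI 'b | EB nat | ED nat

definition vars :: "('n, 'b::finite) circuit \<Rightarrow> 'b cvar set" where
  "vars C = VQ ` (cset C QMem \<union> cset C Cap) \<union> VPh ` (cset C PhiMem \<union> cset C Ind)
            \<union> range VV \<union> range VI"

definition eqns :: "('n, 'b::finite) circuit \<Rightarrow> 'b ceq set" where
  "eqns C = EQ ` (cset C QMem \<union> cset C Cap) \<union> EPh ` (cset C PhiMem \<union> cset C Ind)
            \<union> EV ` {b. qdev (cls C b)} \<union> EI ` {b. phidev (cls C b)}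
            \<union> EB ` {..<rB C} \<union> ED ` {..<rD C}"

definition qv :: "'b set \<Rightarrow> ('b cvar \<Rightarrow> real) \<Rightarrow> real^'b" where
  "qv S x = (\<chi> b. if b \<in> S then x (VQ b) else 0)"
definition phv :: "'b set \<Rightarrow> ('b cvar \<Rightarrow> real) \<Rightarrow> real^'b" where
  "phv S x = (\<chi> b. if b \<in> S then x (VPh b) else 0)"
definition vv :: "'b set \<Rightarrow> ('b cvar \<Rightarrow> real) \<Rightarrow> real^'b" where
  "vv S x = (\<chi> b. if b \<in> S then x (VV b) else 0)"
definition iv :: "'b set \<Rightarrow> ('b cvar \<Rightarrow> real) \<Rightarrow> real^'b" where
  "iv S x = (\<chi> b. if b \<in> S then x (VI b) else 0)"

definition fq :: "('n, 'b::finite) circuit \<Rightarrow> real \<Rightarrow> ('b cvar \<Rightarrow> real) \<Rightarrow> 'b \<Rightarrow> real" where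
  "fq C t x b = (case cls C b of
      QMem \<Rightarrow> eta1 C (qv (cset C QMem) x) (iv (cset C QMem) x) t $ b
    | Cap \<Rightarrow> eta2 C (qv (cset C Cap) x) t $ b
    | CCR \<Rightarrow> eta3 C (iv (cset C CCR) x) t $ b
    | VSrc \<Rightarrow> eta4 C t $ b
    | _ \<Rightarrow> 0)"

definition gphi :: "('n, 'b::finite) circuit \<Rightarrow> real \<Rightarrow> ('b cvar \<Rightarrow> real) \<Rightarrow> 'b \<Rightarrow> real" where
  "gphi C t x b = (case cls C b of
      PhiMem \<Rightarrow> zeta1 C (phv (cset C PhiMem) x) (vv (cset C PhiMem) x) t $ b
    | Ind \<Rightarrow> zeta2 C (phv (cset C Ind) x) t $ b
    | VCR \<Rightarrow> zeta3 C (vv (cset C VCR) x) t $ b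
    | ISrc \<Rightarrow> zeta4 C t $ b
    | _ \<Rightarrow> 0)"

definition rhs :: "('n, 'b::finite) circuit \<Rightarrow> real \<Rightarrow> ('b cvar \<Rightarrow> real) \<Rightarrow> 'b ceq \<Rightarrow> real" where
  "rhs C t x e = (case e of
      EQ b \<Rightarrow> x (VI b)
    | EPh b \<Rightarrow> x (VV b)
    | EV b \<Rightarrow> x (VV b) - fq C t x b
    | EI b \<Rightarrow> x (VI b) - gphi C t x b
    | EB r \<Rightarrow> (\<Sum>b\<in>UNIV. Bm C r b * x (VV b))
    | ED r \<Rightarrow> (\<Sum>b\<in>UNIV. Dm C r b * x (VI b)))"

definition equilibrium :: "('n, 'b::finite) circuit \<Rightarrow> real \<Rightarrow> ('b cvar \<Rightarrow> real) \<Rightarrow> bool" where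
  "equilibrium C t x \<longleftrightarrow> (\<forall>e\<in>eqns C. rhs C t x e = 0)"

definition Kmat :: "('n, 'b::finite) circuit \<Rightarrow> real \<Rightarrow> ('b cvar \<Rightarrow> real) \<Rightarrow> 'b ceq \<Rightarrow> 'b cvar \<Rightarrow> real" where
  "Kmat C t x e u = deriv (\<lambda>s. rhs C t (x(u := x u + s)) e) 0"

definition regular_equilibrium :: "('n, 'b::finite) circuit \<Rightarrow> real \<Rightarrow> ('b cvar \<Rightarrow> real) \<Rightarrow> bool" where
  "regular_equilibrium C t x \<longleftrightarrow> equilibrium C t x \<and> nonsingular (eqns C) (vars C) (Kmat C t x)"

definition admissible_circuit :: "('n::finite, 'b::finite) circuit \<Rightarrow> bool" where
  "admissible_circuit C \<longleftrightarrow>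
     reduced_matrix (loop_vec C) (Bm C) (rB C) \<and>
     reduced_matrix (cutset_vec C) (Dm C) (rD C) \<and>
     C1_map (\<lambda>(q, i, t). eta1 C q i t) \<and> C1_map (\<lambda>(q, t). eta2 C q t) \<and>
     C1_map (\<lambda>(i, t). eta3 C i t) \<and> C1_map (eta4 C) \<and>
     C1_map (\<lambda>(p, v, t). zeta1 C p v t) \<and> C1_map (\<lambda>(p, t). zeta2 C p t) \<and>
     C1_map (\<lambda>(v, t). zeta3 C v t) \<and> C1_map (zeta4 C) \<and>
     (cset C QMem \<noteq> {} \<longrightarrow>
        (\<exists>q i t. \<exists>b\<in>cset C QMem. \<exists>b'\<in>cset C QMem.
           jac (\<lambda>q'. eta1 C q' (maskv (cset C QMem) i) t) (maskv (cset C QMem) q) b b' \<noteq> 0) \<and>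
        (\<exists>q i t. \<exists>b\<in>cset C QMem. \<exists>b'\<in>cset C QMem.
           jac (\<lambda>i'. eta1 C (maskv (cset C QMem) q) i' t) (maskv (cset C QMem) i) b b' \<noteq> 0)) \<and>
     (cset C PhiMem \<noteq> {} \<longrightarrow>
        (\<exists>p v t. \<exists>b\<in>cset C PhiMem. \<exists>b'\<in>cset C PhiMem.
           jac (\<lambda>p'. zeta1 C p' (maskv (cset C PhiMem) v) t) (maskv (cset C PhiMem) p) b b' \<noteq> 0) \<and>
        (\<exists>p v t. \<exists>b\<in>cset C PhiMem. \<exists>b'\<in>cset C PhiMem.
           jac (\<lambda>v'. zeta1 C (maskv (cset C PhiMem) p) v' t) (maskv (cset C PhiMem) v) b b' \<noteq> 0))"

definition R_posdef :: "('n, 'b::finite) circuit \<Rightarrow> bool" where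
  "R_posdef C \<longleftrightarrow> (\<forall>i t. posdef (cset C CCR)
      (jac (\<lambda>i'. eta3 C i' t) (maskv (cset C CCR) i)))"

definition G_posdef :: "('n, 'b::finite) circuit \<Rightarrow> bool" where
  "G_posdef C \<longleftrightarrow> (\<forall>v t. posdef (cset C VCR)
      (jac (\<lambda>v'. zeta3 C v' t) (maskv (cset C VCR) v)))"

definition Em :: "('n, 'b::finite) circuit \<Rightarrow> real \<Rightarrow> ('b cvar \<Rightarrow> real) \<Rightarrow> 'b \<Rightarrow> 'b \<Rightarrow> real" where
  "Em C t x = jac (\<lambda>q. eta1 C q (iv (cset C QMem) x) t) (qv (cset C QMem) x)"
definition Ec :: "('n, 'b::finite) circuit \<Rightarrow> real \<Rightarrow> ('b cvar \<Rightarrow> real) \<Rightarrow> 'b \<Rightarrow> 'b \<Rightarrow> real" where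
  "Ec C t x = jac (\<lambda>q. eta2 C q t) (qv (cset C Cap) x)"
definition Rw :: "('n, 'b::finite) circuit \<Rightarrow> real \<Rightarrow> ('b cvar \<Rightarrow> real) \<Rightarrow> 'b \<Rightarrow> 'b \<Rightarrow> real" where
  "Rw C t x = jac (\<lambda>p. zeta1 C p (vv (cset C PhiMem) x) t) (phv (cset C PhiMem) x)"
definition Rl :: "('n, 'b::finite) circuit \<Rightarrow> real \<Rightarrow> ('b cvar \<Rightarrow> real) \<Rightarrow> 'b \<Rightarrow> 'b \<Rightarrow> real" where
  "Rl C t x = jac (\<lambda>p. zeta2 C p t) (phv (cset C Ind) x)"

end

theory Submission
  imports Defs "HOL-Library.Transitive_Closure_Table"
begin

text \<open>
  Loop and cutset vectors are orthogonal, so \<open>rB + rD \<le> m\<close> and the Jacobian \<open>K\<close> has at most as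
  many rows as columns; hence it is nonsingular iff the linearized circuit equations \<open>K d = 0\<close>
  have only the trivial solution. In a solution the voltage increments are orthogonal to all
  loops and the current increments to all cutsets, so by Tellegen's theorem their power
  \<open>\<Sum> v i\<close> vanishes; only resistive branches contribute to it, and positive definiteness of
  \<open>R\<close> and \<open>G\<close> kills the resistor increments. A remaining nonzero current increment is then
  carried by a loop of voltage sources, inductors and \<open>\<phi>\<close>-memristors, a nonzero voltage
  increment by a cutset of current sources, capacitors and \<open>q\<close>-memristors; once both vanish,
  the charge and flux increments lie in the kernels of the elastances and reluctances.
  Conversely, a kernel vector of an elastance or reluctance, a unit current around a VLW-loop,
  or a unit voltage across an ICM-cutset each give a nonzero solution.
\<close>

section \<open>Linear systems over finite index sets\<close>

lemma sum_delta_mult: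
  fixes f :: "'a \<Rightarrow> real"
  assumes "finite J" "u \<in> J"
  shows "(\<Sum>j\<in>J. (if u = j then 1 else 0) * f j) = f u"
    and "(\<Sum>j\<in>J. f j * (if j = u then 1 else 0)) = f u"
  using assms by (simp_all add: if_distrib[of "\<lambda>c. c * _"] if_distrib[of "\<lambda>c. _ * c"] cong: if_cong)

lemma sum_lincomb_mult:
  fixes c :: "'k \<Rightarrow> real"
  shows "(\<Sum>b\<in>U. (\<Sum>k\<in>K. c k * g k b) * h b) = (\<Sum>k\<in>K. c k * (\<Sum>b\<in>U. g k b * h b))"
  unfolding sum_distrib_left sum_distrib_right by (subst sum.swap) (simp add: mult_ac)

lemma exists_nonzero_solution:
  fixes A :: "'i \<Rightarrow> 'j \<Rightarrow> real"
  assumes "finite I" "finite J" "card I < card J"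
  shows "\<exists>x. (\<exists>j\<in>J. x j \<noteq> 0) \<and> (\<forall>i\<in>I. (\<Sum>j\<in>J. A i j * x j) = 0)"
  using assms
proof (induction I arbitrary: J A rule: finite_induct)
  case empty
  then obtain j where "j \<in> J" by fastforce
  then show ?case by (intro exI[of _ "\<lambda>_. 1"]) auto
next
  case (insert i0 I)
  show ?case
  proof (cases "\<forall>j\<in>J. A i0 j = 0")
    case True
    with insert show ?thesis by fastforce
  next
    case False
    then obtain j0 where j0: "j0 \<in> J" "A i0 j0 \<noteq> 0" by blast
    \<comment> \<open>Eliminate the unknown \<open>j0\<close> with equation \<open>i0\<close> and solve the reduced system.\<close>
    define A' where "A' i j = A i j - A i j0 * A i0 j / A i0 j0" for i j
    have "card I < card (J - {j0})"
      using insert.prems insert.hyps j0 by simp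
    then obtain y where y: "\<exists>j\<in>J - {j0}. y j \<noteq> 0" "\<forall>i\<in>I. (\<Sum>j\<in>J - {j0}. A' i j * y j) = 0"
      using insert.IH[of "J - {j0}" A'] insert.prems by blast
    define x where "x j = (if j = j0 then - (\<Sum>j\<in>J - {j0}. A i0 j * y j) / A i0 j0 else y j)" for j
    have split: "(\<Sum>j\<in>J. B j * x j) = B j0 * x j0 + (\<Sum>j\<in>J - {j0}. B j * y j)" for B
      using j0(1) insert.prems(1) by (simp add: sum.remove x_def)
    have "(\<Sum>j\<in>J. A i j * x j) = (\<Sum>j\<in>J - {j0}. A' i j * y j)" for i
      unfolding split using j0(2)
      by (simp add: x_def A'_def algebra_simps sum_subtractf sum_divide_distrib sum_distrib_left)
    moreover have "(\<Sum>j\<in>J. A i0 j * x j) = 0"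
      unfolding split using j0(2) by (simp add: x_def)
    ultimately show ?thesis
      using y by (intro exI[of _ x]) (auto simp: x_def)
  qed
qed

lemma solvable_if_kernel_trivial:
  fixes A :: "'i \<Rightarrow> 'j \<Rightarrow> real"
  assumes fin: "finite I" "finite J" and card: "card I \<le> card J"
    and ker: "\<forall>x. (\<forall>i\<in>I. (\<Sum>j\<in>J. A i j * x j) = 0) \<longrightarrow> (\<forall>j\<in>J. x j = 0)"
  shows "\<exists>x. \<forall>i\<in>I. (\<Sum>j\<in>J. A i j * x j) = c i"
proof -
  \<comment> \<open>A nonzero solution of the homogeneous system with the extra column \<open>-c\<close> must use that column.\<close>
  define J' where "J' = insert None (Some ` J)"
  define A' where "A' i = case_option (- c i) (A i)" for i
  have sum_J': "(\<Sum>j\<in>J'. f j) = f None + (\<Sum>j\<in>J. f (Some j))" for f :: "'j option \<Rightarrow> real"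
    unfolding J'_def using fin by (simp add: sum.reindex)
  have "card J' = card J + 1"
    unfolding J'_def using fin by (simp add: card_image)
  then obtain z where z: "\<exists>j\<in>J'. z j \<noteq> 0" "\<forall>i\<in>I. (\<Sum>j\<in>J'. A' i j * z j) = 0"
    using exists_nonzero_solution[of I J' A'] fin card J'_def by auto
  then have hom: "\<forall>i\<in>I. (\<Sum>j\<in>J. A i j * z (Some j)) = c i * z None"
    unfolding sum_J' A'_def by (simp add: algebra_simps)
  have "z None \<noteq> 0"
  proof
    assume "z None = 0"
    with hom ker have "\<forall>j\<in>J. z (Some j) = 0" by auto
    with \<open>z None = 0\<close> z(1) show False by (auto simp: J'_def)
  qed
  with hom show ?thesis
    by (intro exI[of _ "\<lambda>j. z (Some j) / z None"]) (simp add: sum_divide_distrib[symmetric])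
qed

lemma nonsingular_kernel_trivial:
  assumes "nonsingular I J A" "finite J" "\<forall>i\<in>I. (\<Sum>j\<in>J. A i j * x j) = 0" "u \<in> J"
  shows "x u = 0"
proof -
  obtain L where L: "\<forall>u\<in>J. \<forall>u'\<in>J. (\<Sum>i\<in>I. L u i * A i u') = (if u = u' then 1 else 0)"
    using assms(1) unfolding nonsingular_def by blast
  have "x u = (\<Sum>u'\<in>J. (if u = u' then 1 else 0) * x u')"
    using assms(2,4) by (simp add: sum_delta_mult)
  also have "\<dots> = (\<Sum>u'\<in>J. (\<Sum>i\<in>I. L u i * A i u') * x u')"
    using L assms(4) by (intro sum.cong) auto
  also have "\<dots> = (\<Sum>i\<in>I. L u i * (\<Sum>j\<in>J. A i j * x j))"
    by (rule sum_lincomb_mult)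
  also have "\<dots> = 0"
    using assms(3) by simp
  finally show ?thesis .
qed

lemma nonsingular_solvable:
  assumes "nonsingular I J A" "finite I"
  shows "\<exists>y. \<forall>i\<in>I. (\<Sum>j\<in>J. A i j * y j) = w i"
proof -
  obtain L where L: "\<forall>i\<in>I. \<forall>i'\<in>I. (\<Sum>j\<in>J. A i j * L j i') = (if i = i' then 1 else 0)"
    using assms(1) unfolding nonsingular_def by blast
  have "(\<Sum>j\<in>J. A i j * (\<Sum>i'\<in>I. L j i' * w i')) = w i" if "i \<in> I" for i
  proof -
    have "(\<Sum>j\<in>J. A i j * (\<Sum>i'\<in>I. L j i' * w i')) = (\<Sum>i'\<in>I. (\<Sum>j\<in>J. A i j * L j i') * w i')"
      by (rule sum_lincomb_mult[symmetric])
    also have "\<dots> = (\<Sum>i'\<in>I. (if i = i' then 1 else 0) * w i')"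
      using L that by (intro sum.cong) auto
    also have "\<dots> = w i"
      using that assms(2) by (simp add: sum_delta_mult)
    finally show ?thesis .
  qed
  then show ?thesis
    by (intro exI[of _ "\<lambda>j. \<Sum>i'\<in>I. L j i' * w i'"]) blast
qed

lemma nonsingular_if_kernel_trivial:
  fixes A :: "'i \<Rightarrow> 'j \<Rightarrow> real"
  assumes fin: "finite I" "finite J" and card: "card I = card J"
    and ker: "\<forall>x. (\<forall>i\<in>I. (\<Sum>j\<in>J. A i j * x j) = 0) \<longrightarrow> (\<forall>j\<in>J. x j = 0)"
  shows "nonsingular I J A"
proof -
  have "\<forall>i'\<in>I. \<exists>x. \<forall>i\<in>I. (\<Sum>j\<in>J. A i j * x j) = (if i = i' then 1 else 0)"
    using solvable_if_kernel_trivial[OF fin _ ker] card by simp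
  then obtain R where R: "\<forall>i'\<in>I. \<forall>i\<in>I. (\<Sum>j\<in>J. A i j * R i' j) = (if i = i' then 1 else 0)"
    by metis
  have ker_transpose: "\<forall>y. (\<forall>j\<in>J. (\<Sum>i\<in>I. A i j * y i) = 0) \<longrightarrow> (\<forall>i\<in>I. y i = 0)"
  proof (intro allI impI ballI)
    fix y i assume y: "\<forall>j\<in>J. (\<Sum>i\<in>I. A i j * y i) = 0" and i: "i \<in> I"
    have "y i = (\<Sum>i'\<in>I. y i' * (if i' = i then 1 else 0))"
      using i fin by (simp add: sum_delta_mult)
    also have "\<dots> = (\<Sum>i'\<in>I. y i' * (\<Sum>j\<in>J. A i' j * R i j))"
      using R i by (intro sum.cong) auto
    also have "\<dots> = (\<Sum>j\<in>J. (\<Sum>i'\<in>I. y i' * A i' j) * R i j)"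
      by (rule sum_lincomb_mult[symmetric])
    also have "\<dots> = 0"
      using y by (simp add: mult.commute)
    finally show "y i = 0" .
  qed
  have "\<forall>j'\<in>J. \<exists>y. \<forall>j\<in>J. (\<Sum>i\<in>I. A i j * y i) = (if j' = j then 1 else 0)"
    using solvable_if_kernel_trivial[OF fin(2,1) _ ker_transpose] card by simp
  then obtain L where "\<forall>j'\<in>J. \<forall>j\<in>J. (\<Sum>i\<in>I. A i j * L j' i) = (if j' = j then 1 else 0)"
    by metis
  then have L: "\<forall>j'\<in>J. \<forall>j\<in>J. (\<Sum>i\<in>I. L j' i * A i j) = (if j' = j then 1 else 0)"
    by (simp add: mult.commute[of "L _ _"])
  have L_eq_R: "L j i' = R i' j" if "j \<in> J" "i' \<in> I" for j i'
  proof -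
    have "L j i' = (\<Sum>i\<in>I. L j i * (if i = i' then 1 else 0))"
      by (rule sum_delta_mult(2)[OF fin(1) that(2), symmetric])
    also have "\<dots> = (\<Sum>i\<in>I. L j i * (\<Sum>j'\<in>J. A i j' * R i' j'))"
      using R that by (intro sum.cong) auto
    also have "\<dots> = (\<Sum>j'\<in>J. (\<Sum>i\<in>I. L j i * A i j') * R i' j')"
      by (rule sum_lincomb_mult[symmetric])
    also have "\<dots> = (\<Sum>j'\<in>J. (if j = j' then 1 else 0) * R i' j')"
      using L that by (intro sum.cong) auto
    also have "\<dots> = R i' j"
      by (rule sum_delta_mult(1)[OF fin(2) that(1)])
    finally show ?thesis .
  qed
  have "(\<Sum>i\<in>I. R i j * A i j') = (if j = j' then 1 else 0)" if "j \<in> J" "j' \<in> J" for j j'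
  proof -
    have "(\<Sum>i\<in>I. R i j * A i j') = (\<Sum>i\<in>I. L j i * A i j')"
      using L_eq_R that by (intro sum.cong) auto
    with L that show ?thesis
      by simp
  qed
  with R show ?thesis
    unfolding nonsingular_def by (intro exI[of _ "\<lambda>j i. R i j"]) blast
qed

lemma nonsingular_iff_kernel_trivial:
  fixes A :: "'i \<Rightarrow> 'j \<Rightarrow> real"
  assumes fin: "finite I" "finite J" and card: "card I \<le> card J"
  shows "nonsingular I J A \<longleftrightarrow> (\<forall>x. (\<forall>i\<in>I. (\<Sum>j\<in>J. A i j * x j) = 0) \<longrightarrow> (\<forall>j\<in>J. x j = 0))"
proof
  show "\<forall>x. (\<forall>i\<in>I. (\<Sum>j\<in>J. A i j * x j) = 0) \<longrightarrow> (\<forall>j\<in>J. x j = 0)"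
    if "nonsingular I J A"
    using nonsingular_kernel_trivial[OF that fin(2)] by blast
next
  assume ker: "\<forall>x. (\<forall>i\<in>I. (\<Sum>j\<in>J. A i j * x j) = 0) \<longrightarrow> (\<forall>j\<in>J. x j = 0)"
  have "\<not> card I < card J"
  proof
    assume "card I < card J"
    then obtain x where "\<exists>j\<in>J. x j \<noteq> 0" "\<forall>i\<in>I. (\<Sum>j\<in>J. A i j * x j) = 0"
      using exists_nonzero_solution[OF fin] by blast
    with ker show False by blast
  qed
  with card have "card I = card J" by simp
  from nonsingular_if_kernel_trivial[OF fin this ker] show "nonsingular I J A" .
qed

lemma posdef_quadratic_form:
  assumes "posdef S A"
  shows "0 \<le> (\<Sum>b\<in>S. \<Sum>b'\<in>S. u b * A b b' * u b')"
    and "(\<Sum>b\<in>S. \<Sum>b'\<in>S. u b * A b b' * u b') = 0 \<Longrightarrow> b \<in> S \<Longrightarrow> u b = 0"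
proof -
  show "0 \<le> (\<Sum>b\<in>S. \<Sum>b'\<in>S. u b * A b b' * u b')"
  proof (cases "\<exists>b\<in>S. u b \<noteq> 0")
    case True
    with assms show ?thesis
      unfolding posdef_def by (simp add: less_imp_le)
  qed simp
  show "u b = 0" if "(\<Sum>b\<in>S. \<Sum>b'\<in>S. u b * A b b' * u b') = 0" "b \<in> S"
    using assms that unfolding posdef_def by force
qed

lemma reduced_matrix_orthogonal:
  assumes "reduced_matrix P A r" "\<forall>k<r. (\<Sum>b\<in>UNIV. A k b * v b) = 0" "P w"
  shows "(\<Sum>b\<in>UNIV. w b * v b) = 0"
proof -
  obtain c where "w = (\<lambda>b. \<Sum>k<r. c k * A k b)"
    using assms(1,3) unfolding reduced_matrix_def by blast
  then show ?thesis
    using assms(2) by (simp add: sum_lincomb_mult)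
qed

lemma reduced_matrices_rank_le:
  fixes A B :: "nat \<Rightarrow> 'b::finite \<Rightarrow> real"
  assumes A: "reduced_matrix P A r" and B: "reduced_matrix Q B s"
    and orth: "\<And>w c. P w \<Longrightarrow> Q c \<Longrightarrow> (\<Sum>b\<in>UNIV. w b * c b) = 0"
  shows "r + s \<le> CARD('b)"
proof (rule ccontr)
  assume "\<not> r + s \<le> CARD('b)"
  then have "card (UNIV :: 'b set) < card ({..<r} <+> {..<s})"
    by (simp add: card_Plus)
  then obtain c where c: "\<exists>j\<in>{..<r} <+> {..<s}. c j \<noteq> 0"
    "\<forall>b::'b\<in>UNIV. (\<Sum>j\<in>{..<r} <+> {..<s}. case_sum A B j b * c j) = 0"
    using exists_nonzero_solution[of UNIV "{..<r} <+> {..<s}" "\<lambda>b j. case_sum A B j b"] by auto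
  define z where "z b = (\<Sum>k<r. c (Inl k) * A k b)" for b
  define w where "w b = (\<Sum>k<s. c (Inr k) * B k b)" for b
  have zw: "w b = - z b" for b
    using c(2) by (simp add: sum.Plus z_def w_def mult.commute add_eq_0_iff2)
  have "(\<Sum>b\<in>UNIV. A k b * w b) = 0" if "k < r" for k
  proof -
    have "(\<Sum>b\<in>UNIV. B k' b * A k b) = 0" if "k' < s" for k'
      using orth A B \<open>k < r\<close> that unfolding reduced_matrix_def by (simp add: mult.commute)
    then have "(\<Sum>b\<in>UNIV. w b * A k b) = 0"
      unfolding w_def by (simp add: sum_lincomb_mult)
    then show ?thesis
      by (simp add: mult.commute)
  qed
  then have "(\<Sum>b\<in>UNIV. z b * w b) = 0"
    unfolding z_def by (simp add: sum_lincomb_mult)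
  then have "(\<Sum>b\<in>UNIV. z b * z b) = 0"
    by (simp add: zw sum_negf)
  then have z0: "z b = 0" for b
    using sum_nonneg_eq_0_iff[of UNIV "\<lambda>b. z b * z b"] by simp
  then have w0: "w b = 0" for b
    by (simp add: zw)
  have "\<forall>k<r. c (Inl k) = 0"
    using A z0 unfolding reduced_matrix_def z_def by (auto dest!: spec[of _ "\<lambda>k. c (Inl k)"])
  moreover have "\<forall>k<s. c (Inr k) = 0"
    using B w0 unfolding reduced_matrix_def w_def by (auto dest!: spec[of _ "\<lambda>k. c (Inr k)"])
  ultimately show False
    using c(1) by auto
qed

section \<open>Loops, cutsets and Tellegen's theorem\<close>

abbreviation reach :: "('n, 'b::finite) circuit \<Rightarrow> 'b set \<Rightarrow> 'n \<Rightarrow> 'n \<Rightarrow> bool" where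
  "reach C E \<equiv> (adj C E)\<^sup>*\<^sup>*"

definition joins :: "('n, 'b::finite) circuit \<Rightarrow> 'b \<Rightarrow> 'n \<Rightarrow> 'n \<Rightarrow> bool" where
  "joins C f u v \<longleftrightarrow> (src C f = u \<and> dst C f = v) \<or> (src C f = v \<and> dst C f = u)"

lemma adj_iff_joins: "adj C E u v \<longleftrightarrow> (\<exists>f\<in>E. joins C f u v)"
  unfolding adj_def joins_def by blast

lemma is_cycle_iff_joins:
  "is_cycle C vs es \<longleftrightarrow> length vs = length es \<and> es \<noteq> [] \<and> distinct vs \<and> distinct es \<and>
     (\<forall>j < length es. joins C (es!j) (vs!j) (vs!((j + 1) mod length es)))"
  unfolding is_cycle_def joins_def by blast

lemma reach_sym: "reach C E u v \<Longrightarrow> reach C E v u"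
  by (rule sympD[OF symp_rtranclp]) (auto simp: symp_def adj_def)

lemma reach_mono: "E \<subseteq> E' \<Longrightarrow> reach C E u v \<Longrightarrow> reach C E' u v"
  by (rule mono_rtranclp[rule_format, of "adj C E"]) (auto simp: adj_def)

lemma reach_edge: "b \<in> E \<Longrightarrow> reach C E (src C b) (dst C b)" "b \<in> E \<Longrightarrow> reach C E (dst C b) (src C b)"
  by (rule r_into_rtranclp, auto simp: adj_def)+

lemma reach_restrict:
  assumes "\<forall>b\<in>E - E'. reach C E' (src C b) (dst C b)" "reach C E u v"
  shows "reach C E' u v"
proof -
  have adj_reach: "reach C E' x y" if xy: "adj C E x y" for x y
  proof -
    obtain b where b: "b \<in> E" "joins C b x y"
      using xy adj_iff_joins by metis
    then have "reach C E' (src C b) (dst C b)"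
      using assms(1) reach_edge(1)[of b E' C] by (cases "b \<in> E'") auto
    with b(2) show ?thesis
      unfolding joins_def by (auto intro: reach_sym)
  qed
  from assms(2) show ?thesis
    by (induction rule: rtranclp_induct) (auto intro: rtranclp_trans adj_reach)
qed

lemma ncomp_less:
  fixes C :: "('n::finite, 'b::finite) circuit"
  assumes "E' \<subseteq> E" "reach C E a b" "\<not> reach C E' a b"
  shows "ncomp C E < ncomp C E'"
proof -
  \<comment> \<open>Every component of \<open>E\<close> is a union of components of \<open>E'\<close>, and the components of \<open>a\<close>
    and \<open>b\<close> with respect to \<open>E'\<close> are merged.\<close>
  define comp where "comp F u = {v. reach C F u v}" for F u
  define merge where "merge X = {v. \<exists>u\<in>X. reach C E u v}" for X
  have merge_comp: "merge (comp E' u) = comp E u" for u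
    unfolding merge_def comp_def
    by (auto intro: rtranclp_trans reach_mono[OF assms(1)])
  then have "range (comp E) = merge ` range (comp E')"
    by (auto simp: image_image)
  moreover have "\<not> inj_on merge (range (comp E'))"
  proof
    assume "inj_on merge (range (comp E'))"
    moreover have "comp E a = comp E b"
      using assms(2) unfolding comp_def by (auto intro: rtranclp_trans reach_sym)
    ultimately have "comp E' a = comp E' b"
      by (metis merge_comp inj_onD rangeI)
    with assms(3) show False
      unfolding comp_def by auto
  qed
  ultimately have "card (range (comp E)) < card (range (comp E'))"
    using card_image_le[of "range (comp E')" merge] inj_on_iff_eq_card[of "range (comp E')" merge]
    by fastforce
  then show ?thesis
    unfolding ncomp_def comp_def by (simp add: full_SetCompr_eq)
qed

lemma increases_comp_iff:
  fixes C :: "('n::finite, 'b::finite) circuit"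
  shows "increases_comp C S \<longleftrightarrow> (\<exists>b\<in>S. \<not> reach C (UNIV - S) (src C b) (dst C b))"
proof
  assume "increases_comp C S"
  show "\<exists>b\<in>S. \<not> reach C (UNIV - S) (src C b) (dst C b)"
  proof (rule ccontr)
    assume "\<not> ?thesis"
    then have "reach C UNIV u v \<longleftrightarrow> reach C (UNIV - S) u v" for u v
      using reach_restrict[of UNIV "UNIV - S" C u v] reach_mono[of "UNIV - S" UNIV C u v] by auto
    then have "reach C UNIV = reach C (UNIV - S)"
      by (intro ext)
    with \<open>increases_comp C S\<close> show False
      unfolding increases_comp_def ncomp_def by simp
  qed
next
  assume "\<exists>b\<in>S. \<not> reach C (UNIV - S) (src C b) (dst C b)"
  then show "increases_comp C S"
    unfolding increases_comp_def by (blast intro: ncomp_less reach_edge)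
qed

lemma exists_minimal_subset:
  assumes "finite F" "P F"
  shows "\<exists>S\<subseteq>F. P S \<and> (\<forall>S'. S' \<subset> S \<longrightarrow> \<not> P S')"
proof -
  obtain S where S: "S \<in> {S. S \<subseteq> F \<and> P S}" "\<forall>S'\<in>{S. S \<subseteq> F \<and> P S}. S' \<le> S \<longrightarrow> S = S'"
    using finite_has_minimal2[of "{S. S \<subseteq> F \<and> P S}" F] assms by auto
  moreover have "\<not> P S'" if "S' \<subset> S" for S'
  proof
    assume "P S'"
    with that S have "S = S'"
      by auto
    with that show False
      by simp
  qed
  ultimately show ?thesis
    by auto
qed

definition cut :: "('n, 'b::finite) circuit \<Rightarrow> 'n set \<Rightarrow> 'b set" where
  "cut C X = {b. (src C b \<in> X) \<noteq> (dst C b \<in> X)}"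

definition cut_vec :: "('n, 'b::finite) circuit \<Rightarrow> 'n set \<Rightarrow> 'b \<Rightarrow> real" where
  "cut_vec C X b = (if b \<in> cut C X then (if src C b \<in> X then 1 else -1) else 0)"

lemma cut_vec_eq_0_iff: "cut_vec C X b = 0 \<longleftrightarrow> b \<notin> cut C X"
  by (simp add: cut_vec_def)

lemma cutset_vec_iff: "cutset_vec C w \<longleftrightarrow> (\<exists>X. is_cutset C (cut C X) \<and> w = cut_vec C X)"
proof
  assume "cutset_vec C w"
  then obtain X where "is_cutset C (cut C X)" "w = cut_vec C X"
    unfolding cutset_vec_def cut_vec_def cut_def by blast
  then show "\<exists>X. is_cutset C (cut C X) \<and> w = cut_vec C X"
    by blast
next
  assume "\<exists>X. is_cutset C (cut C X) \<and> w = cut_vec C X"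
  then show "cutset_vec C w"
    unfolding cutset_vec_def cut_vec_def cut_def by blast
qed

lemma reach_outside_cut:
  assumes "reach C (UNIV - cut C X) u v"
  shows "u \<in> X \<longleftrightarrow> v \<in> X"
  using assms by (induction rule: rtranclp_induct) (auto simp: adj_def cut_def)

lemma cut_component_subset:
  "cut C {u. reach C (UNIV - S) x u} \<subseteq> S"
proof
  fix b assume b: "b \<in> cut C {u. reach C (UNIV - S) x u}"
  show "b \<in> S"
  proof (rule ccontr)
    assume "b \<notin> S"
    then have "reach C (UNIV - S) (src C b) (dst C b)" "reach C (UNIV - S) (dst C b) (src C b)"
      by (simp_all add: reach_edge)
    with b show False
      unfolding cut_def by (auto intro: rtranclp_trans)
  qed
qed

lemma cutset_nonempty: "is_cutset C S \<Longrightarrow> S \<noteq> {}"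
  by (auto simp: is_cutset_def increases_comp_def)

lemma cutset_eq_cut:
  fixes C :: "('n::finite, 'b::finite) circuit"
  assumes "is_cutset C S"
  obtains X where "S = cut C X"
proof -
  obtain f where f: "f \<in> S" "\<not> reach C (UNIV - S) (src C f) (dst C f)"
    using assms increases_comp_iff unfolding is_cutset_def by blast
  define X where "X = {u. reach C (UNIV - S) (src C f) u}"
  have "cut C X \<subseteq> S"
    unfolding X_def by (rule cut_component_subset)
  moreover have "\<not> reach C (UNIV - cut C X) (src C f) (dst C f)"
    using f(2) reach_outside_cut[of C X "src C f" "dst C f"] by (auto simp: X_def)
  then have "increases_comp C (cut C X)"
    unfolding increases_comp_iff using f(2) by (auto simp: X_def cut_def)
  ultimately have "cut C X = S"
    using assms unfolding is_cutset_def by blast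
  then show thesis
    by (metis that)
qed

definition cycle_vec :: "('n, 'b::finite) circuit \<Rightarrow> 'n list \<Rightarrow> 'b list \<Rightarrow> 'b \<Rightarrow> real" where
  "cycle_vec C vs es b = (\<Sum>j<length es. if es!j = b then (if src C b = vs!j then 1 else -1) else 0)"

lemma loop_vec_iff: "loop_vec C w \<longleftrightarrow> (\<exists>vs es. is_cycle C vs es \<and> w = cycle_vec C vs es)"
  unfolding loop_vec_def cycle_vec_def by (simp add: fun_eq_iff)

lemma cycle_vec_inner:
  "(\<Sum>b\<in>UNIV. cycle_vec C vs es b * y b)
     = (\<Sum>j<length es. (if src C (es!j) = vs!j then 1 else -1) * y (es!j))"
proof -
  have "(\<Sum>b\<in>UNIV. cycle_vec C vs es b * y b)
      = (\<Sum>j<length es. \<Sum>b\<in>UNIV. if es!j = b then (if src C b = vs!j then 1 else -1) * y b else 0)"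
    unfolding cycle_vec_def sum_distrib_right by (subst sum.swap) (simp add: if_distrib[of "\<lambda>c. c * _"] cong: if_cong)
  then show ?thesis
    by simp
qed

lemma cycle_vec_nth:
  assumes "is_cycle C vs es" "k < length es"
  shows "cycle_vec C vs es (es!k) = (if src C (es!k) = vs!k then 1 else -1)"
proof -
  have "cycle_vec C vs es (es!k) = (\<Sum>j<length es. if j = k then (if src C (es!k) = vs!k then 1 else -1) else 0)"
    unfolding cycle_vec_def using assms
    by (intro sum.cong refl) (auto simp: is_cycle_def nth_eq_iff_index_eq)
  with assms(2) show ?thesis
    by simp
qed

lemma cycle_vec_support: "cycle_vec C vs es b \<noteq> 0 \<Longrightarrow> b \<in> set es"
  unfolding cycle_vec_def by (force intro: sum.neutral simp: in_set_conv_nth)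

lemma sum_cyclic_difference:
  fixes f :: "nat \<Rightarrow> real"
  assumes "0 < n"
  shows "(\<Sum>j<n. f j - f ((j + 1) mod n)) = 0"
proof -
  obtain m where n: "n = Suc m"
    using assms by (cases n) auto
  have "(\<Sum>j<n. f ((j + 1) mod n)) = (\<Sum>j<m. f (Suc j)) + f 0"
    unfolding n by (simp add: mod_Suc)
  also have "\<dots> = (\<Sum>j<n. f j)"
    unfolding n sum.lessThan_Suc_shift by simp
  finally show ?thesis
    by (simp add: sum_subtractf)
qed

lemma cycle_vec_orthogonal_cut_vec:
  assumes "is_cycle C vs es"
  shows "(\<Sum>b\<in>UNIV. cycle_vec C vs es b * cut_vec C X b) = 0"
proof -
  \<comment> \<open>The cut vector is the coboundary of the indicator of \<open>X\<close>, which telescopes around the cycle.\<close>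
  define ind where "ind u = (if u \<in> X then 1 else (0::real))" for u
  have "cut_vec C X b = ind (src C b) - ind (dst C b)" for b
    unfolding cut_vec_def cut_def ind_def by auto
  moreover have "src C (es!j) = vs!j \<and> dst C (es!j) = vs!((j + 1) mod length es) \<or>
      dst C (es!j) = vs!j \<and> src C (es!j) = vs!((j + 1) mod length es)" if "j < length es" for j
    using assms that unfolding is_cycle_def by blast
  ultimately have "(if src C (es!j) = vs!j then 1 else -1) * cut_vec C X (es!j)
      = ind (vs!j) - ind (vs!((j + 1) mod length es))" if "j < length es" for j
    using that by fastforce
  then have "(\<Sum>b\<in>UNIV. cycle_vec C vs es b * cut_vec C X b)
      = (\<Sum>j<length es. ind (vs!j) - ind (vs!((j + 1) mod length es)))"
    unfolding cycle_vec_inner by (intro sum.cong) auto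
  also have "\<dots> = 0"
    using assms unfolding is_cycle_def by (intro sum_cyclic_difference) auto
  finally show ?thesis .
qed

lemma loop_vec_orthogonal_cutset_vec:
  assumes "loop_vec C w" "cutset_vec C c"
  shows "(\<Sum>b\<in>UNIV. w b * c b) = 0"
  using assms cycle_vec_orthogonal_cut_vec unfolding loop_vec_iff cutset_vec_iff by blast

lemma simple_path:
  assumes "reach C E a b"
  obtains ns fs where "ns!0 = a" "last ns = b" "length ns = Suc (length fs)" "distinct ns"
    "distinct fs" "set fs \<subseteq> E" "\<forall>j<length fs. joins C (fs!j) (ns!j) (ns!Suc j)"
proof -
  obtain ps where path: "rtrancl_path (adj C E) a ps b" and dist: "distinct (a # ps)"
    using assms rtrancl_path_distinct unfolding rtranclp_eq_rtrancl_path by metis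
  define ns where "ns = a # ps"
  have len_ns: "length ns = Suc (length ps)" and "ns!0 = a" and "distinct ns"
    using dist by (simp_all add: ns_def)
  have "last ns = b"
    using path rtrancl_path_last[OF path] by (cases ps) (auto simp: ns_def elim: rtrancl_path.cases)
  have "\<exists>f\<in>E. joins C f (ns!j) (ns!Suc j)" if "j < length ps" for j
    using rtrancl_path_nth[OF path that] by (simp add: ns_def adj_iff_joins)
  then obtain edge where edge: "\<And>j. j < length ps \<Longrightarrow> edge j \<in> E \<and> joins C (edge j) (ns!j) (ns!Suc j)"
    by metis
  \<comment> \<open>Consecutive pairs of a path without repeated nodes are distinct, hence so are the edges.\<close>
  have edge_neq: "edge j \<noteq> edge k" if "j < k" "k < length ps" for j k
  proof
    assume "edge j = edge k"
    then have "ns!j = ns!k \<or> ns!j = ns!Suc k"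
      using edge[of j] edge[of k] that unfolding joins_def by auto
    with that \<open>distinct ns\<close> len_ns show False
      by (auto simp: nth_eq_iff_index_eq)
  qed
  then have "inj_on edge {..<length ps}"
    by (intro inj_onI) (metis lessThan_iff linorder_neqE_nat)
  then have "distinct (map edge [0..<length ps])"
    by (simp add: distinct_map atLeast0LessThan)
  moreover have "set (map edge [0..<length ps]) \<subseteq> E"
    using edge by auto
  ultimately show thesis
    using that[of ns "map edge [0..<length ps]"] \<open>ns!0 = a\<close> \<open>last ns = b\<close> len_ns \<open>distinct ns\<close> edge
    by simp
qed

lemma cycle_through_edge:
  assumes "e \<notin> E" "reach C E (dst C e) (src C e)"
  obtains vs es where "is_cycle C vs es" "es!0 = e" "vs!0 = src C e" "set es \<subseteq> insert e E"
proof -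
  obtain ns fs where ns: "ns!0 = dst C e" "last ns = src C e" "length ns = Suc (length fs)"
    "distinct ns" and fs: "distinct fs" "set fs \<subseteq> E" "\<forall>j<length fs. joins C (fs!j) (ns!j) (ns!Suc j)"
    using assms(2) by (rule simple_path)
  \<comment> \<open>Close the path from \<open>dst e\<close> to \<open>src e\<close> with \<open>e\<close>; the nodes are rotated to start at \<open>src e\<close>.\<close>
  define vs where "vs = last ns # butlast ns"
  define es where "es = e # fs"
  have len: "length vs = length es" "length es = Suc (length fs)"
    by (simp_all add: vs_def es_def ns(3))
  have vs_Suc: "vs!Suc i = ns!i" if "i < length fs" for i
    using that ns(3) by (simp add: vs_def nth_butlast)
  have vs_next: "vs!((j + 1) mod length es) = ns!j" if "j < length es" for j
  proof (cases "j + 1 < length es")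
    case True
    then show ?thesis
      using vs_Suc len by simp
  next
    case False
    with that len have "j = length fs"
      by simp
    moreover have "last ns = ns!length fs"
      using ns(3) last_conv_nth[of ns] by fastforce
    ultimately show ?thesis
      using len by (simp add: vs_def)
  qed
  have "ns = butlast ns @ [last ns]"
    using ns(3) by (metis append_butlast_last_id list.size(3) nat.distinct(1))
  with \<open>distinct ns\<close> have "distinct (butlast ns @ [last ns])"
    by metis
  then have "distinct vs"
    by (simp add: vs_def)
  moreover have "distinct es"
    using fs assms(1) by (auto simp: es_def)
  moreover have "joins C (es!j) (vs!j) (vs!((j + 1) mod length es))" if "j < length es" for j
  proof (cases j)
    case 0
    then show ?thesis
      using vs_next[OF that] ns(1,2) by (simp add: es_def vs_def joins_def)
  next
    case (Suc i)
    with that len have "i < length fs"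
      by simp
    with Suc show ?thesis
      using vs_next[OF that] vs_Suc fs(3) by (simp add: es_def)
  qed
  ultimately have "is_cycle C vs es"
    using len unfolding is_cycle_iff_joins by (simp add: es_def)
  moreover have "es!0 = e" "vs!0 = src C e"
    by (simp_all add: es_def vs_def ns(2))
  moreover have "set es \<subseteq> insert e E"
    using fs(2) by (auto simp: es_def)
  ultimately show thesis
    by (rule that)
qed

lemma cutset_in_support:
  fixes C :: "('n::finite, 'b::finite) circuit"
  assumes orth: "\<forall>w. loop_vec C w \<longrightarrow> (\<Sum>b\<in>UNIV. w b * v b) = 0" and "v e \<noteq> 0"
  obtains S where "is_cutset C S" "S \<subseteq> {b. v b \<noteq> 0}"
proof -
  define F where "F = {b. v b \<noteq> 0}"
  have "e \<notin> UNIV - F"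
    using \<open>v e \<noteq> 0\<close> by (simp add: F_def)
  \<comment> \<open>A cycle through \<open>e\<close> avoiding the rest of \<open>F\<close> would not be orthogonal to \<open>v\<close>.\<close>
  have "\<not> reach C (UNIV - F) (dst C e) (src C e)"
  proof
    assume "reach C (UNIV - F) (dst C e) (src C e)"
    then obtain vs es where cyc: "is_cycle C vs es" "es!0 = e" "vs!0 = src C e"
      "set es \<subseteq> insert e (UNIV - F)"
      by (rule cycle_through_edge[OF \<open>e \<notin> UNIV - F\<close>])
    then have "es \<noteq> []" "distinct es"
      by (simp_all add: is_cycle_def)
    have "(\<Sum>b\<in>UNIV. cycle_vec C vs es b * v b) = (\<Sum>j<length es. if j = 0 then v e else 0)"
      unfolding cycle_vec_inner
    proof (rule sum.cong)
      fix j assume "j \<in> {..<length es}"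
      moreover have "es!j \<in> UNIV - F" if "j \<noteq> 0" "j < length es"
      proof -
        have "es!j \<noteq> es!0"
          using that \<open>distinct es\<close> \<open>es \<noteq> []\<close> by (simp add: nth_eq_iff_index_eq)
        with that(2) cyc(2,4) show ?thesis
          using nth_mem by blast
      qed
      ultimately show "(if src C (es!j) = vs!j then 1 else -1) * v (es!j) = (if j = 0 then v e else 0)"
        using cyc(2,3) by (auto simp: F_def)
    qed simp
    also have "\<dots> = v e"
      using \<open>es \<noteq> []\<close> by simp
    finally have "(\<Sum>b\<in>UNIV. cycle_vec C vs es b * v b) = v e" .
    moreover have "(\<Sum>b\<in>UNIV. cycle_vec C vs es b * v b) = 0"
      using orth cyc(1) unfolding loop_vec_iff by blast
    ultimately show False
      using \<open>v e \<noteq> 0\<close> by simp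
  qed
  then have "increases_comp C F"
    unfolding increases_comp_iff using \<open>v e \<noteq> 0\<close> by (auto simp: F_def intro: reach_sym)
  then obtain S where "S \<subseteq> F" "increases_comp C S" "\<forall>S'. S' \<subset> S \<longrightarrow> \<not> increases_comp C S'"
    using exists_minimal_subset[of F "increases_comp C"] by auto
  then show thesis
    by (intro that) (auto simp: is_cutset_def F_def)
qed

lemma edge_leaves_component:
  assumes "f \<in> S" "\<not> reach C (UNIV - S) s t" "reach C (UNIV - (S - {f})) s t"
  shows "(src C f \<in> {u. reach C (UNIV - S) s u}) \<noteq> (dst C f \<in> {u. reach C (UNIV - S) s u})"
proof
  define A where "A = {u. reach C (UNIV - S) s u}"
  assume f: "(src C f \<in> A) = (dst C f \<in> A)"
  \<comment> \<open>Then adding \<open>f\<close> back does not enlarge the component of \<open>s\<close>.\<close>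
  have closed: "w \<in> A" if u: "u \<in> A" and uw: "adj C (UNIV - (S - {f})) u w" for u w
  proof -
    obtain b where b: "b \<in> UNIV - (S - {f})" "joins C b u w"
      using uw unfolding adj_iff_joins by blast
    show ?thesis
    proof (cases "b = f")
      case True
      with b(2) f u show ?thesis
        unfolding joins_def by auto
    next
      case False
      with b have "adj C (UNIV - S) u w"
        by (auto simp: adj_iff_joins)
      with u show ?thesis
        unfolding A_def by (auto intro: rtranclp.rtrancl_into_rtrancl)
    qed
  qed
  have "t \<in> A"
    using assms(3) by (induction rule: rtranclp_induct) (auto simp: A_def intro: closed[unfolded A_def mem_Collect_eq])
  with assms(2) show False
    by (simp add: A_def)
qed

lemma minimal_separator_is_cutset:
  fixes C :: "('n::finite, 'b::finite) circuit"
  assumes sep: "\<not> reach C (UNIV - S) s t"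
    and min: "\<forall>S'. S' \<subset> S \<longrightarrow> reach C (UNIV - S') s t"
    and conn: "reach C UNIV s t"
  shows "is_cutset C S"
proof -
  define A where "A = {u. reach C (UNIV - S) s u}"
  define B where "B = {u. reach C (UNIV - S) t u}"
  have "A \<inter> B = {}"
    using sep unfolding A_def B_def by (auto intro: rtranclp_trans reach_sym)
  moreover have "(src C f \<in> A) \<noteq> (dst C f \<in> A)" "(src C f \<in> B) \<noteq> (dst C f \<in> B)"
    if "f \<in> S" for f
  proof -
    have "reach C (UNIV - (S - {f})) s t"
      using min that by auto
    moreover have "\<not> reach C (UNIV - S) t s"
      using sep by (auto intro: reach_sym)
    ultimately show "(src C f \<in> A) \<noteq> (dst C f \<in> A)" "(src C f \<in> B) \<noteq> (dst C f \<in> B)"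
      using edge_leaves_component[OF that sep] edge_leaves_component[OF that, of C t s]
      unfolding A_def B_def by (auto intro: reach_sym)
  qed
  ultimately have ends: "(src C f \<in> A \<and> dst C f \<in> B) \<or> (src C f \<in> B \<and> dst C f \<in> A)"
    if "f \<in> S" for f
    using that by blast
  have "\<not> increases_comp C S'" if "S' \<subset> S" for S'
  proof -
    \<comment> \<open>Without \<open>S'\<close>, \<open>s\<close> and \<open>t\<close> are still connected, hence so are both ends of every
      edge of \<open>S\<close>.\<close>
    have "reach C (UNIV - S') s u" if "u \<in> A \<union> B" for u
      using that min \<open>S' \<subset> S\<close> reach_mono[of "UNIV - S" "UNIV - S'" C] unfolding A_def B_def
      by (blast intro: rtranclp_trans)
    then have "reach C (UNIV - S') (src C b) (dst C b)" if "b \<in> S'" for b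
      using ends[of b] that \<open>S' \<subset> S\<close> by (blast intro: rtranclp_trans reach_sym)
    then show ?thesis
      unfolding increases_comp_iff by blast
  qed
  moreover have "increases_comp C S"
    unfolding increases_comp_def by (rule ncomp_less[OF _ conn sep]) simp
  ultimately show ?thesis
    unfolding is_cutset_def by blast
qed

lemma loop_in_support:
  fixes C :: "('n::finite, 'b::finite) circuit"
  assumes orth: "\<forall>c. cutset_vec C c \<longrightarrow> (\<Sum>b\<in>UNIV. c b * i b) = 0" and "i e \<noteq> 0"
  obtains L where "is_loop C L" "L \<subseteq> {b. i b \<noteq> 0}"
proof (cases "reach C ({b. i b \<noteq> 0} - {e}) (dst C e) (src C e)")
  case True
  have "e \<notin> {b. i b \<noteq> 0} - {e}"
    by simp
  from this True obtain vs es where "is_cycle C vs es" "es!0 = e" "vs!0 = src C e"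
    "set es \<subseteq> insert e ({b. i b \<noteq> 0} - {e})"
    by (rule cycle_through_edge)
  with \<open>i e \<noteq> 0\<close> show thesis
    by (intro that[of "set es"]) (auto simp: is_loop_def)
next
  case False
  \<comment> \<open>Otherwise a minimal set separating the ends of \<open>e\<close> and avoiding the rest of the support
    is a cutset meeting the support only in \<open>e\<close>, and its vector is not orthogonal to \<open>i\<close>.\<close>
  define F where "F = {b. i b \<noteq> 0} - {e}"
  define sep where "sep S \<longleftrightarrow> \<not> reach C (UNIV - S) (src C e) (dst C e)" for S
  have "sep (UNIV - F)"
    using False unfolding sep_def F_def by (auto intro: reach_sym simp: Diff_Diff_Int)
  then obtain S where S: "S \<subseteq> UNIV - F" "sep S" "\<forall>S'. S' \<subset> S \<longrightarrow> \<not> sep S'"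
    using exists_minimal_subset[of "UNIV - F" sep] by auto
  then have "is_cutset C S"
    unfolding sep_def by (intro minimal_separator_is_cutset) (auto intro: reach_edge)
  then obtain X where X: "S = cut C X"
    by (rule cutset_eq_cut)
  have "e \<in> S"
    using S(2) reach_edge(1)[of e "UNIV - S" C] unfolding sep_def by auto
  have "(\<Sum>b\<in>UNIV. cut_vec C X b * i b) = (\<Sum>b\<in>UNIV. if b = e then cut_vec C X e * i e else 0)"
    using S(1) X unfolding F_def by (intro sum.cong) (auto simp: cut_vec_eq_0_iff[symmetric])
  also have "\<dots> \<noteq> 0"
    using \<open>e \<in> S\<close> X \<open>i e \<noteq> 0\<close> by (simp add: cut_vec_eq_0_iff)
  finally show thesis
    using orth \<open>is_cutset C S\<close> X unfolding cutset_vec_iff by blast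
qed

lemma tellegen:
  fixes C :: "('n::finite, 'b::finite) circuit"
  assumes "\<forall>w. loop_vec C w \<longrightarrow> (\<Sum>b\<in>UNIV. w b * v b) = 0"
    and cut: "\<forall>c. cutset_vec C c \<longrightarrow> (\<Sum>b\<in>UNIV. c b * i b) = 0"
  shows "(\<Sum>b\<in>UNIV. v b * i b) = 0"
  using assms(1)
proof (induction "card {b. v b \<noteq> 0}" arbitrary: v rule: less_induct)
  case less
  show ?case
  proof (cases "\<forall>b. v b = 0")
    case False
    \<comment> \<open>Subtract from \<open>v\<close> a multiple of a cutset vector inside its support, killing one entry.\<close>
    then obtain e where "v e \<noteq> 0"
      by blast
    with less.prems obtain S where S: "is_cutset C S" "S \<subseteq> {b. v b \<noteq> 0}"
      by (rule cutset_in_support)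
    obtain X where X: "S = cut C X"
      using S(1) by (rule cutset_eq_cut)
    have cv: "cutset_vec C (cut_vec C X)"
      unfolding cutset_vec_iff using S(1) X by blast
    obtain f where f: "f \<in> S"
      using cutset_nonempty[OF S(1)] by blast
    define c where "c = v f / cut_vec C X f"
    define v' where "v' b = v b - c * cut_vec C X b" for b
    have "{b. v' b \<noteq> 0} \<subseteq> {b. v b \<noteq> 0} - {f}"
      using S(2) X f by (auto simp: v'_def c_def cut_vec_eq_0_iff)
    then have "card {b. v' b \<noteq> 0} \<le> card ({b. v b \<noteq> 0} - {f})"
      by (intro card_mono) auto
    also have "\<dots> < card {b. v b \<noteq> 0}"
      using f S(2) by (intro card_Diff1_less) auto
    finally have fewer: "card {b. v' b \<noteq> 0} < card {b. v b \<noteq> 0}" .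
    have v'_inner: "(\<Sum>b\<in>UNIV. y b * v' b) = (\<Sum>b\<in>UNIV. y b * v b) - c * (\<Sum>b\<in>UNIV. y b * cut_vec C X b)"
      for y
      by (simp add: v'_def right_diff_distrib sum_subtractf sum_distrib_left mult.left_commute)
    have "\<forall>w. loop_vec C w \<longrightarrow> (\<Sum>b\<in>UNIV. w b * v' b) = 0"
      using less.prems loop_vec_orthogonal_cutset_vec[OF _ cv] by (simp add: v'_inner)
    with fewer have "(\<Sum>b\<in>UNIV. v' b * i b) = 0"
      by (rule less.hyps)
    moreover have "(\<Sum>b\<in>UNIV. cut_vec C X b * i b) = 0"
      using cut cv by blast
    ultimately show ?thesis
      using v'_inner[of i] by (simp add: mult.commute)
  qed simp
qed

section \<open>The Jacobian of the circuit equations\<close>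

lemma C1_map_has_derivative:
  "C1_map f \<Longrightarrow> (f has_derivative frechet_derivative f (at z)) (at z)"
  unfolding C1_map_def using frechet_derivative_works differentiable_def by blast

lemma jac_comp_expansion:
  fixes F :: "'a::real_normed_vector \<Rightarrow> real^'m" and g :: "real^'m \<Rightarrow> 'a"
  assumes "(F has_derivative D) (at (g z))" "(g has_derivative g') (at z)"
  shows "D (g' h) $ i = (\<Sum>j\<in>UNIV. jac (\<lambda>y. F (g y)) z i j * h $ j)"
proof -
  have "((\<lambda>y. F (g y)) has_derivative (\<lambda>h. D (g' h))) (at z)"
    by (rule has_derivative_compose[OF assms(2,1)])
  then have "linear (\<lambda>h. D (g' h))" "frechet_derivative (\<lambda>y. F (g y)) (at z) = (\<lambda>h. D (g' h))"
    by (auto simp: has_derivative_linear frechet_derivative_at[symmetric])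
  then show ?thesis
    using Cartesian_Space.linear_componentwise[of "\<lambda>h. D (g' h)" h i]
    by (simp add: jac_def linear_matrix_vector_mul_eq mult.commute)
qed

lemma has_real_derivative_along_line:
  fixes F :: "'a::real_normed_vector \<Rightarrow> real^'b"
  assumes "(F has_derivative D) (at z)"
  shows "((\<lambda>s. F (z + s *\<^sub>R a) $ b) has_real_derivative D a $ b) (at 0)"
proof -
  have "((\<lambda>s. z + s *\<^sub>R a) has_derivative (\<lambda>s. s *\<^sub>R a)) (at 0)"
    by (auto intro!: derivative_eq_intros)
  moreover have "(F has_derivative D) (at (z + 0 *\<^sub>R a))"
    using assms by simp
  ultimately have "((\<lambda>s. F (z + s *\<^sub>R a)) has_derivative (\<lambda>s. D (s *\<^sub>R a))) (at 0)"
    by (rule has_derivative_compose)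
  then have "((\<lambda>s. F (z + s *\<^sub>R a) $ b) has_derivative (\<lambda>s. D (s *\<^sub>R a) $ b)) (at 0)"
    by (rule bounded_linear.has_derivative[OF bounded_linear_vec_nth])
  moreover have "(\<lambda>s. D (s *\<^sub>R a) $ b) = (*) (D a $ b)"
    using linear_scale[OF has_derivative_linear[OF assms]] by (auto simp: fun_eq_iff)
  ultimately show ?thesis
    by (simp add: has_field_derivative_def)
qed

lemma has_real_derivative_partial2:
  fixes G :: "real^'b \<Rightarrow> real \<Rightarrow> real^'b"
  assumes "C1_map (\<lambda>(p, t). G p t)"
  shows "((\<lambda>s. G (p + s *\<^sub>R h) t $ b) has_real_derivative
           (\<Sum>b'\<in>UNIV. jac (\<lambda>p. G p t) p b b' * h $ b')) (at 0)"
proof -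
  define D where "D = frechet_derivative (\<lambda>(p, t). G p t) (at (p, t))"
  have D: "((\<lambda>(p, t). G p t) has_derivative D) (at (p, t))"
    unfolding D_def by (rule C1_map_has_derivative[OF assms])
  have "((\<lambda>y. (y, t)) has_derivative (\<lambda>h. (h, 0))) (at p)"
    by (auto intro!: derivative_eq_intros)
  from jac_comp_expansion[OF _ this, of "\<lambda>(p, t). G p t" D h b] D
  have "D (h, 0) $ b = (\<Sum>b'\<in>UNIV. jac (\<lambda>p. G p t) p b b' * h $ b')"
    by simp
  with has_real_derivative_along_line[OF D, of "(h, 0)" b] show ?thesis
    by simp
qed

lemma has_real_derivative_partial3:
  fixes G :: "real^'b \<Rightarrow> real^'b \<Rightarrow> real \<Rightarrow> real^'b"
  assumes "C1_map (\<lambda>(p, q, t). G p q t)"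
  shows "((\<lambda>s. G (p + s *\<^sub>R h) (q + s *\<^sub>R k) t $ b) has_real_derivative
           (\<Sum>b'\<in>UNIV. jac (\<lambda>p. G p q t) p b b' * h $ b')
           + (\<Sum>b'\<in>UNIV. jac (\<lambda>q. G p q t) q b b' * k $ b')) (at 0)"
proof -
  define D where "D = frechet_derivative (\<lambda>(p, q, t). G p q t) (at (p, q, t))"
  have D: "((\<lambda>(p, q, t). G p q t) has_derivative D) (at (p, q, t))"
    unfolding D_def by (rule C1_map_has_derivative[OF assms])
  have "((\<lambda>y. (y, q, t)) has_derivative (\<lambda>h. (h, 0, 0))) (at p)"
    "((\<lambda>y. (p, y, t)) has_derivative (\<lambda>k. (0, k, 0))) (at q)"
    by (auto intro!: derivative_eq_intros simp: zero_prod_def)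
  from jac_comp_expansion[OF _ this(1), of "\<lambda>(p, q, t). G p q t" D h b]
    jac_comp_expansion[OF _ this(2), of "\<lambda>(p, q, t). G p q t" D k b] D
  have "D (h, 0, 0) $ b = (\<Sum>b'\<in>UNIV. jac (\<lambda>p. G p q t) p b b' * h $ b')"
    "D (0, k, 0) $ b = (\<Sum>b'\<in>UNIV. jac (\<lambda>q. G p q t) q b b' * k $ b')"
    by simp_all
  moreover have "D (h, k, 0) = D (h, 0, 0) + D (0, k, 0)"
    using linear_add[OF has_derivative_linear[OF D], of "(h, 0, 0)" "(0, k, 0)"] by simp
  ultimately show ?thesis
    using has_real_derivative_along_line[OF D, of "(h, k, 0)" b] by simp
qed

definition Rm :: "('n, 'b::finite) circuit \<Rightarrow> real \<Rightarrow> ('b cvar \<Rightarrow> real) \<Rightarrow> 'b \<Rightarrow> 'b \<Rightarrow> real" where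
  "Rm C t x = jac (\<lambda>i. eta1 C (qv (cset C QMem) x) i t) (iv (cset C QMem) x)"
definition Rr :: "('n, 'b::finite) circuit \<Rightarrow> real \<Rightarrow> ('b cvar \<Rightarrow> real) \<Rightarrow> 'b \<Rightarrow> 'b \<Rightarrow> real" where
  "Rr C t x = jac (\<lambda>i. eta3 C i t) (iv (cset C CCR) x)"
definition Gw :: "('n, 'b::finite) circuit \<Rightarrow> real \<Rightarrow> ('b cvar \<Rightarrow> real) \<Rightarrow> 'b \<Rightarrow> 'b \<Rightarrow> real" where
  "Gw C t x = jac (\<lambda>v. zeta1 C (phv (cset C PhiMem) x) v t) (vv (cset C PhiMem) x)"
definition Gg :: "('n, 'b::finite) circuit \<Rightarrow> real \<Rightarrow> ('b cvar \<Rightarrow> real) \<Rightarrow> 'b \<Rightarrow> 'b \<Rightarrow> real" where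
  "Gg C t x = jac (\<lambda>v. zeta3 C v t) (vv (cset C VCR) x)"

definition fq_deriv :: "('n, 'b::finite) circuit \<Rightarrow> real \<Rightarrow> ('b cvar \<Rightarrow> real) \<Rightarrow> ('b cvar \<Rightarrow> real) \<Rightarrow> 'b \<Rightarrow> real" where
  "fq_deriv C t x d b = (case cls C b of
      QMem \<Rightarrow> (\<Sum>b'\<in>cset C QMem. Em C t x b b' * d (VQ b')) + (\<Sum>b'\<in>cset C QMem. Rm C t x b b' * d (VI b'))
    | Cap \<Rightarrow> (\<Sum>b'\<in>cset C Cap. Ec C t x b b' * d (VQ b'))
    | CCR \<Rightarrow> (\<Sum>b'\<in>cset C CCR. Rr C t x b b' * d (VI b'))
    | _ \<Rightarrow> 0)"

definition gphi_deriv :: "('n, 'b::finite) circuit \<Rightarrow> real \<Rightarrow> ('b cvar \<Rightarrow> real) \<Rightarrow> ('b cvar \<Rightarrow> real) \<Rightarrow> 'b \<Rightarrow> real" where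
  "gphi_deriv C t x d b = (case cls C b of
      PhiMem \<Rightarrow> (\<Sum>b'\<in>cset C PhiMem. Rw C t x b b' * d (VPh b')) + (\<Sum>b'\<in>cset C PhiMem. Gw C t x b b' * d (VV b'))
    | Ind \<Rightarrow> (\<Sum>b'\<in>cset C Ind. Rl C t x b b' * d (VPh b'))
    | VCR \<Rightarrow> (\<Sum>b'\<in>cset C VCR. Gg C t x b b' * d (VV b'))
    | _ \<Rightarrow> 0)"

definition rhs_deriv :: "('n, 'b::finite) circuit \<Rightarrow> real \<Rightarrow> ('b cvar \<Rightarrow> real) \<Rightarrow> ('b cvar \<Rightarrow> real) \<Rightarrow> 'b ceq \<Rightarrow> real" where
  "rhs_deriv C t x d e = (case e of
      EQ b \<Rightarrow> d (VI b)
    | EPh b \<Rightarrow> d (VV b)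
    | EV b \<Rightarrow> d (VV b) - fq_deriv C t x d b
    | EI b \<Rightarrow> d (VI b) - gphi_deriv C t x d b
    | EB r \<Rightarrow> (\<Sum>b\<in>UNIV. Bm C r b * d (VV b))
    | ED r \<Rightarrow> (\<Sum>b\<in>UNIV. Dm C r b * d (VI b)))"

definition linearized_solution ::
  "('n, 'b::finite) circuit \<Rightarrow> real \<Rightarrow> ('b cvar \<Rightarrow> real) \<Rightarrow> ('b cvar \<Rightarrow> real) \<Rightarrow> bool" where
  "linearized_solution C t x d \<longleftrightarrow> (\<forall>e\<in>eqns C. rhs_deriv C t x d e = 0)"

lemma fun_upd_add:
  fixes x :: "'a \<Rightarrow> real"
  shows "x(u := x u + s) = (\<lambda>w. x w + s * (if w = u then 1 else 0))"
  by (auto simp: fun_eq_iff)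

lemma selectors_add:
  fixes x y :: "'b::finite cvar \<Rightarrow> real"
  shows "qv S (\<lambda>w. x w + s * y w) = qv S x + s *\<^sub>R qv S y"
    and "phv S (\<lambda>w. x w + s * y w) = phv S x + s *\<^sub>R phv S y"
    and "vv S (\<lambda>w. x w + s * y w) = vv S x + s *\<^sub>R vv S y"
    and "iv S (\<lambda>w. x w + s * y w) = iv S x + s *\<^sub>R iv S y"
  by (auto simp: qv_def phv_def vv_def iv_def vec_eq_iff)

lemma sum_restrict_mult:
  fixes A :: "'b::finite \<Rightarrow> real"
  shows "(\<Sum>b\<in>UNIV. A b * (if b \<in> S then f b else 0)) = (\<Sum>b\<in>S. A b * f b)"
  by (simp add: if_distrib[of "\<lambda>c. _ * c"] sum.If_cases)

lemma sum_selectors: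
  fixes y :: "'b::finite cvar \<Rightarrow> real"
  shows "(\<Sum>b\<in>UNIV. A b * qv S y $ b) = (\<Sum>b\<in>S. A b * y (VQ b))"
    and "(\<Sum>b\<in>UNIV. A b * phv S y $ b) = (\<Sum>b\<in>S. A b * y (VPh b))"
    and "(\<Sum>b\<in>UNIV. A b * vv S y $ b) = (\<Sum>b\<in>S. A b * y (VV b))"
    and "(\<Sum>b\<in>UNIV. A b * iv S y $ b) = (\<Sum>b\<in>S. A b * y (VI b))"
  by (simp_all add: qv_def phv_def vv_def iv_def sum_restrict_mult)

lemma fq_has_real_derivative:
  fixes C :: "('n::finite, 'b::finite) circuit"
  assumes "admissible_circuit C"
  shows "((\<lambda>s. fq C t (\<lambda>w. x w + s * y w) b) has_real_derivative fq_deriv C t x y b) (at 0)"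
proof (cases "cls C b")
  case QMem
  from has_real_derivative_partial3[of "eta1 C" "qv (cset C QMem) x" "qv (cset C QMem) y"
      "iv (cset C QMem) x" "iv (cset C QMem) y" t b] assms(1)
  show ?thesis
    using QMem by (simp add: admissible_circuit_def fq_def fq_deriv_def selectors_add sum_selectors
        Em_def Rm_def)
next
  case Cap
  from has_real_derivative_partial2[of "eta2 C" "qv (cset C Cap) x" "qv (cset C Cap) y" t b] assms(1)
  show ?thesis
    using Cap by (simp add: admissible_circuit_def fq_def fq_deriv_def selectors_add sum_selectors Ec_def)
next
  case CCR
  from has_real_derivative_partial2[of "eta3 C" "iv (cset C CCR) x" "iv (cset C CCR) y" t b] assms(1)
  show ?thesis
    using CCR by (simp add: admissible_circuit_def fq_def fq_deriv_def selectors_add sum_selectors Rr_def)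
qed (simp_all add: fq_def fq_deriv_def)

lemma gphi_has_real_derivative:
  fixes C :: "('n::finite, 'b::finite) circuit"
  assumes "admissible_circuit C"
  shows "((\<lambda>s. gphi C t (\<lambda>w. x w + s * y w) b) has_real_derivative gphi_deriv C t x y b) (at 0)"
proof (cases "cls C b")
  case PhiMem
  from has_real_derivative_partial3[of "zeta1 C" "phv (cset C PhiMem) x" "phv (cset C PhiMem) y"
      "vv (cset C PhiMem) x" "vv (cset C PhiMem) y" t b] assms(1)
  show ?thesis
    using PhiMem by (simp add: admissible_circuit_def gphi_def gphi_deriv_def selectors_add sum_selectors
        Rw_def Gw_def)
next
  case Ind
  from has_real_derivative_partial2[of "zeta2 C" "phv (cset C Ind) x" "phv (cset C Ind) y" t b] assms(1)
  show ?thesis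
    using Ind by (simp add: admissible_circuit_def gphi_def gphi_deriv_def selectors_add sum_selectors Rl_def)
next
  case VCR
  from has_real_derivative_partial2[of "zeta3 C" "vv (cset C VCR) x" "vv (cset C VCR) y" t b] assms(1)
  show ?thesis
    using VCR by (simp add: admissible_circuit_def gphi_def gphi_deriv_def selectors_add sum_selectors Gg_def)
qed (simp_all add: gphi_def gphi_deriv_def)

lemma Kmat_eq_rhs_deriv:
  assumes "admissible_circuit C"
  shows "Kmat C t x e u = rhs_deriv C t x (\<lambda>w. if w = u then 1 else 0) e"
  unfolding Kmat_def fun_upd_add
proof (rule DERIV_imp_deriv)
  show "((\<lambda>s. rhs C t (\<lambda>w. x w + s * (if w = u then 1 else 0)) e) has_real_derivative
      rhs_deriv C t x (\<lambda>w. if w = u then 1 else 0) e) (at 0)"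
    using fq_has_real_derivative[OF assms, of t x "\<lambda>w. if w = u then 1 else 0"]
      gphi_has_real_derivative[OF assms, of t x "\<lambda>w. if w = u then 1 else 0"]
    by (cases e) (auto simp: rhs_def rhs_deriv_def mult.commute intro!: derivative_eq_intros)
qed

lemma finite_vars: "finite (vars C)"
  unfolding vars_def by simp

lemma mem_vars [simp]:
  "VQ b \<in> vars C \<longleftrightarrow> cls C b = QMem \<or> cls C b = Cap"
  "VPh b \<in> vars C \<longleftrightarrow> cls C b = PhiMem \<or> cls C b = Ind"
  "VV b \<in> vars C" "VI b \<in> vars C"
  by (auto simp: vars_def cset_def)

lemma sum_vars_unit:
  fixes d :: "'b::finite cvar \<Rightarrow> real"
  shows "w \<in> vars C \<Longrightarrow> (\<Sum>u\<in>vars C. (if w = u then 1 else 0) * d u) = d w"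
  using finite_vars[of C] by (simp add: sum_delta_mult)

lemma sum_vars_lincomb:
  fixes c :: "'k \<Rightarrow> real" and d :: "'b::finite cvar \<Rightarrow> real"
  assumes "\<forall>k\<in>K. g k \<in> vars C"
  shows "(\<Sum>u\<in>vars C. (\<Sum>k\<in>K. c k * (if g k = u then 1 else 0)) * d u) = (\<Sum>k\<in>K. c k * d (g k))"
  using assms finite_vars[of C] by (simp add: sum_lincomb_mult sum_delta_mult)

lemma fq_deriv_sum_vars:
  "(\<Sum>u\<in>vars C. fq_deriv C t x (\<lambda>w. if w = u then 1 else 0) b * d u) = fq_deriv C t x d b"
  by (cases "cls C b") (simp_all add: fq_deriv_def distrib_right sum.distrib sum_vars_lincomb cset_def)

lemma gphi_deriv_sum_vars:
  "(\<Sum>u\<in>vars C. gphi_deriv C t x (\<lambda>w. if w = u then 1 else 0) b * d u) = gphi_deriv C t x d b"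
  by (cases "cls C b") (simp_all add: gphi_deriv_def distrib_right sum.distrib sum_vars_lincomb cset_def)

lemma rhs_deriv_sum_vars:
  "(\<Sum>u\<in>vars C. rhs_deriv C t x (\<lambda>w. if w = u then 1 else 0) e * d u) = rhs_deriv C t x d e"
proof (cases e)
  case (EV b)
  then show ?thesis
    using fq_deriv_sum_vars[of C t x b d]
    by (simp add: rhs_deriv_def left_diff_distrib sum_subtractf sum_vars_unit)
next
  case (EI b)
  then show ?thesis
    using gphi_deriv_sum_vars[of C t x b d]
    by (simp add: rhs_deriv_def left_diff_distrib sum_subtractf sum_vars_unit)
next
  case (EB r)
  then show ?thesis
    using sum_vars_lincomb[of UNIV VV C "Bm C r" d]
    by (simp add: rhs_deriv_def)
next
  case (ED r)
  then show ?thesis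
    using sum_vars_lincomb[of UNIV VI C "Dm C r" d]
    by (simp add: rhs_deriv_def)
qed (simp_all add: rhs_deriv_def sum_vars_unit)

lemma Kmat_kernel_iff:
  assumes "admissible_circuit C"
  shows "(\<forall>e\<in>eqns C. (\<Sum>u\<in>vars C. Kmat C t x e u * d u) = 0) \<longleftrightarrow> linearized_solution C t x d"
  by (simp add: linearized_solution_def Kmat_eq_rhs_deriv[OF assms] rhs_deriv_sum_vars)

lemma card_eqns_le_card_vars:
  fixes C :: "('n, 'b::finite) circuit"
  assumes "rB C + rD C \<le> CARD('b)"
  shows "card (eqns C) \<le> card (vars C)"
proof -
  \<comment> \<open>Constitutive rows go to voltages, loop and cutset rows injectively to currents.\<close>
  obtain f :: "nat \<Rightarrow> 'b" where f: "inj_on f {..<rB C + rD C}"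
    using card_le_inj[of "{..<rB C + rD C}" "UNIV :: 'b set"] assms by auto
  define g where "g e = (case e of EQ b \<Rightarrow> VQ b | EPh b \<Rightarrow> VPh b | EV b \<Rightarrow> VV b | EI b \<Rightarrow> VV b
      | EB r \<Rightarrow> VI (f r) | ED r \<Rightarrow> VI (f (rB C + r)))" for e
  have "inj_on g (eqns C)"
  proof (rule inj_onI)
    fix e e' assume "e \<in> eqns C" "e' \<in> eqns C" "g e = g e'"
    then show "e = e'"
      by (cases e; cases e') (auto simp: g_def eqns_def cset_def qdev_def phidev_def dest!: inj_onD[OF f])
  qed
  moreover have "g ` eqns C \<subseteq> vars C"
    by (auto simp: g_def eqns_def cset_def)
  ultimately show ?thesis
    using card_inj_on_le finite_vars by blast
qed

lemma Rr_posdef: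
  assumes "R_posdef C"
  shows "posdef (cset C CCR) (Rr C t x)"
proof -
  have "iv (cset C CCR) x = maskv (cset C CCR) (\<chi> b. x (VI b))"
    by (simp add: iv_def maskv_def vec_eq_iff)
  with assms show ?thesis
    unfolding R_posdef_def Rr_def by metis
qed

lemma Gg_posdef:
  assumes "G_posdef C"
  shows "posdef (cset C VCR) (Gg C t x)"
proof -
  have "vv (cset C VCR) x = maskv (cset C VCR) (\<chi> b. x (VV b))"
    by (simp add: vv_def maskv_def vec_eq_iff)
  with assms show ?thesis
    unfolding G_posdef_def Gg_def by metis
qed

section \<open>Solutions of the linearized circuit equations\<close>

lemma linearized_solution_iff:
  "linearized_solution C t x d \<longleftrightarrow>
     (\<forall>b. cls C b \<in> {QMem, Cap} \<longrightarrow> d (VI b) = 0) \<and>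
     (\<forall>b. cls C b \<in> {PhiMem, Ind} \<longrightarrow> d (VV b) = 0) \<and>
     (\<forall>r<rB C. (\<Sum>b\<in>UNIV. Bm C r b * d (VV b)) = 0) \<and>
     (\<forall>r<rD C. (\<Sum>b\<in>UNIV. Dm C r b * d (VI b)) = 0) \<and>
     (\<forall>b. qdev (cls C b) \<longrightarrow> d (VV b) = fq_deriv C t x d b) \<and>
     (\<forall>b. phidev (cls C b) \<longrightarrow> d (VI b) = gphi_deriv C t x d b)"
  unfolding linearized_solution_def eqns_def ball_Un by (auto simp: cset_def rhs_deriv_def)

lemma linearized_solution_orthogonal:
  fixes C :: "('n::finite, 'b::finite) circuit"
  assumes "admissible_circuit C" "linearized_solution C t x d"
  shows "\<forall>w. loop_vec C w \<longrightarrow> (\<Sum>b\<in>UNIV. w b * d (VV b)) = 0"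
    and "\<forall>c. cutset_vec C c \<longrightarrow> (\<Sum>b\<in>UNIV. c b * d (VI b)) = 0"
  using assms reduced_matrix_orthogonal[of "loop_vec C" "Bm C" "rB C" "\<lambda>b. d (VV b)"]
    reduced_matrix_orthogonal[of "cutset_vec C" "Dm C" "rD C" "\<lambda>b. d (VI b)"]
  unfolding admissible_circuit_def linearized_solution_iff by blast+

lemma linearized_resistor_increments_zero:
  fixes C :: "('n::finite, 'b::finite) circuit"
  assumes adm: "admissible_circuit C" and "R_posdef C" "G_posdef C"
    and sol: "linearized_solution C t x d"
  shows "cls C b = CCR \<Longrightarrow> d (VI b) = 0" and "cls C b = VCR \<Longrightarrow> d (VV b) = 0"
proof -
  define v where "v b = d (VV b)" for b
  define i where "i b = d (VI b)" for b
  have "(\<Sum>b\<in>UNIV. v b * i b) = 0"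
    unfolding v_def i_def by (rule tellegen[OF linearized_solution_orthogonal[OF adm sol]])
  \<comment> \<open>Only the resistive branches contribute to the power balance.\<close>
  moreover have "v b * i b = (if cls C b = CCR then i b * (\<Sum>b'\<in>cset C CCR. Rr C t x b b' * i b') else 0)
      + (if cls C b = VCR then v b * (\<Sum>b'\<in>cset C VCR. Gg C t x b b' * v b') else 0)" for b
    using sol unfolding linearized_solution_iff v_def i_def
    by (cases "cls C b") (auto simp: qdev_def phidev_def fq_deriv_def gphi_deriv_def)
  ultimately have "(\<Sum>b\<in>cset C CCR. \<Sum>b'\<in>cset C CCR. i b * Rr C t x b b' * i b')
      + (\<Sum>b\<in>cset C VCR. \<Sum>b'\<in>cset C VCR. v b * Gg C t x b b' * v b') = 0"
    by (simp add: sum.distrib sum.If_cases cset_def sum_distrib_left mult.assoc)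
  moreover have R: "posdef (cset C CCR) (Rr C t x)" and G: "posdef (cset C VCR) (Gg C t x)"
    using Rr_posdef Gg_posdef assms by blast+
  ultimately have "(\<Sum>b\<in>cset C CCR. \<Sum>b'\<in>cset C CCR. i b * Rr C t x b b' * i b') = 0"
      "(\<Sum>b\<in>cset C VCR. \<Sum>b'\<in>cset C VCR. v b * Gg C t x b b' * v b') = 0"
    using posdef_quadratic_form(1)[OF R, of i] posdef_quadratic_form(1)[OF G, of v] by linarith+
  then show "cls C b = CCR \<Longrightarrow> d (VI b) = 0" "cls C b = VCR \<Longrightarrow> d (VV b) = 0"
    using posdef_quadratic_form(2)[OF R] posdef_quadratic_form(2)[OF G]
    unfolding v_def i_def by (simp_all add: cset_def)
qed

lemma linearized_currents_zero:
  fixes C :: "('n::finite, 'b::finite) circuit"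
  assumes adm: "admissible_circuit C" and "R_posdef C" "G_posdef C"
    and sol: "linearized_solution C t x d" and no_loop: "\<not> (\<exists>L. VLW_loop C L)"
  shows "d (VI b) = 0"
proof (rule ccontr)
  assume "d (VI b) \<noteq> 0"
  with linearized_solution_orthogonal(2)[OF adm sol]
  obtain L where L: "is_loop C L" "L \<subseteq> {b. d (VI b) \<noteq> 0}"
    by (rule loop_in_support)
  have "cls C b' \<in> {VSrc, Ind, PhiMem}" if "b' \<in> L" for b'
  proof -
    have "d (VI b') \<noteq> 0"
      using L(2) that by blast
    moreover have "(\<Sum>b''\<in>cset C VCR. Gg C t x b' b'' * d (VV b'')) = 0"
      using linearized_resistor_increments_zero(2)[OF assms(1-4)] by (simp add: cset_def)
    ultimately show ?thesis
      using sol linearized_resistor_increments_zero(1)[OF assms(1-4), of b'] unfolding linearized_solution_iff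
      by (cases "cls C b'") (auto simp: phidev_def gphi_deriv_def)
  qed
  with L(1) no_loop show False
    unfolding VLW_loop_def by blast
qed

lemma linearized_voltages_zero:
  fixes C :: "('n::finite, 'b::finite) circuit"
  assumes adm: "admissible_circuit C" and "R_posdef C" "G_posdef C"
    and sol: "linearized_solution C t x d" and no_cutset: "\<not> (\<exists>S. ICM_cutset C S)"
  shows "d (VV b) = 0"
proof (rule ccontr)
  assume "d (VV b) \<noteq> 0"
  with linearized_solution_orthogonal(1)[OF adm sol]
  obtain S where S: "is_cutset C S" "S \<subseteq> {b. d (VV b) \<noteq> 0}"
    by (rule cutset_in_support)
  have "cls C b' \<in> {ISrc, Cap, QMem}" if "b' \<in> S" for b'
  proof -
    have "d (VV b') \<noteq> 0"
      using S(2) that by blast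
    moreover have "(\<Sum>b''\<in>cset C CCR. Rr C t x b' b'' * d (VI b'')) = 0"
      using linearized_resistor_increments_zero(1)[OF assms(1-4)] by (simp add: cset_def)
    ultimately show ?thesis
      using sol linearized_resistor_increments_zero(2)[OF assms(1-4), of b'] unfolding linearized_solution_iff
      by (cases "cls C b'") (auto simp: qdev_def fq_deriv_def)
  qed
  with S(1) no_cutset show False
    unfolding ICM_cutset_def by blast
qed

lemma linearized_solution_trivial:
  fixes C :: "('n::finite, 'b::finite) circuit"
  assumes adm: "admissible_circuit C" and "R_posdef C" "G_posdef C"
    and Em: "nonsingular (cset C QMem) (cset C QMem) (Em C t x)"
    and Ec: "nonsingular (cset C Cap) (cset C Cap) (Ec C t x)"
    and Rw: "nonsingular (cset C PhiMem) (cset C PhiMem) (Rw C t x)"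
    and Rl: "nonsingular (cset C Ind) (cset C Ind) (Rl C t x)"
    and "\<not> (\<exists>L. VLW_loop C L)" "\<not> (\<exists>S. ICM_cutset C S)"
    and sol: "linearized_solution C t x d" and "u \<in> vars C"
  shows "d u = 0"
proof -
  have v: "d (VV b) = 0" and i: "d (VI b) = 0" for b
    using linearized_voltages_zero linearized_currents_zero assms by blast+
  have kernels: "\<forall>b\<in>cset C QMem. (\<Sum>b'\<in>cset C QMem. Em C t x b b' * d (VQ b')) = 0"
    "\<forall>b\<in>cset C Cap. (\<Sum>b'\<in>cset C Cap. Ec C t x b b' * d (VQ b')) = 0"
    "\<forall>b\<in>cset C PhiMem. (\<Sum>b'\<in>cset C PhiMem. Rw C t x b b' * d (VPh b')) = 0"
    "\<forall>b\<in>cset C Ind. (\<Sum>b'\<in>cset C Ind. Rl C t x b b' * d (VPh b')) = 0"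
    using sol unfolding linearized_solution_iff
    by (auto simp: qdev_def phidev_def fq_deriv_def gphi_deriv_def cset_def v i)
  show ?thesis
  proof (cases u)
    case (VQ b)
    with \<open>u \<in> vars C\<close> show ?thesis
      using nonsingular_kernel_trivial[OF Em _ kernels(1)] nonsingular_kernel_trivial[OF Ec _ kernels(2)]
      by (auto simp: cset_def)
  next
    case (VPh b)
    with \<open>u \<in> vars C\<close> show ?thesis
      using nonsingular_kernel_trivial[OF Rw _ kernels(3)] nonsingular_kernel_trivial[OF Rl _ kernels(4)]
      by (auto simp: cset_def)
  qed (simp_all add: v i)
qed

lemma sum_cset_restrict:
  fixes A y :: "'b::finite \<Rightarrow> real"
  shows "(\<Sum>b'\<in>cset C c'. A b' * (if cls C b' = c then y b' else 0)) = (if c' = c then \<Sum>b'\<in>cset C c. A b' * y b' else 0)"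
proof (cases "c' = c")
  case True
  then show ?thesis
    by (auto simp: cset_def intro: sum.cong)
next
  case False
  then have "A b' * (if cls C b' = c then y b' else 0) = 0" if "b' \<in> cset C c'" for b'
    using that by (simp add: cset_def)
  with False show ?thesis
    by (simp add: sum.neutral)
qed

lemma nonsingular_if_linearized_kernel_trivial:
  fixes C :: "('n::finite, 'b::finite) circuit"
  assumes ker: "\<forall>d. linearized_solution C t x d \<longrightarrow> (\<forall>u\<in>vars C. d u = 0)"
  shows "nonsingular (cset C QMem) (cset C QMem) (Em C t x)"
    and "nonsingular (cset C Cap) (cset C Cap) (Ec C t x)"
    and "nonsingular (cset C PhiMem) (cset C PhiMem) (Rw C t x)"
    and "nonsingular (cset C Ind) (cset C Ind) (Rl C t x)"
proof -
  \<comment> \<open>A kernel vector of an elastance (reluctance) matrix is a solution with only charge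
    (flux) increments.\<close>
  have charge: "nonsingular (cset C c) (cset C c) E"
    if "c \<in> {QMem, Cap}" "E = (if c = QMem then Em C t x else Ec C t x)" for c E
  proof (rule ccontr)
    assume "\<not> nonsingular (cset C c) (cset C c) E"
    then obtain y where y: "\<exists>j\<in>cset C c. y j \<noteq> 0" "\<forall>i\<in>cset C c. (\<Sum>j\<in>cset C c. E i j * y j) = 0"
      using nonsingular_iff_kernel_trivial[of "cset C c" "cset C c" E] by auto
    define d where "d u = (case u of VQ b \<Rightarrow> if cls C b = c then y b else 0 | _ \<Rightarrow> 0)" for u
    have sol_d: "linearized_solution C t x d"
      using that y(2) unfolding linearized_solution_iff
      by (auto simp: d_def qdev_def fq_deriv_def gphi_deriv_def sum_cset_restrict cset_def split: dev.split)
    obtain j where j: "j \<in> cset C c" "y j \<noteq> 0"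
      using y(1) by blast
    then have "VQ j \<in> vars C"
      using that by (auto simp: cset_def)
    with ker sol_d have "d (VQ j) = 0"
      by blast
    with j show False
      by (simp add: d_def cset_def)
  qed
  have flux: "nonsingular (cset C c) (cset C c) E"
    if "c \<in> {PhiMem, Ind}" "E = (if c = PhiMem then Rw C t x else Rl C t x)" for c E
  proof (rule ccontr)
    assume "\<not> nonsingular (cset C c) (cset C c) E"
    then obtain y where y: "\<exists>j\<in>cset C c. y j \<noteq> 0" "\<forall>i\<in>cset C c. (\<Sum>j\<in>cset C c. E i j * y j) = 0"
      using nonsingular_iff_kernel_trivial[of "cset C c" "cset C c" E] by auto
    define d where "d u = (case u of VPh b \<Rightarrow> if cls C b = c then y b else 0 | _ \<Rightarrow> 0)" for u
    have sol_d: "linearized_solution C t x d"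
      using that y(2) unfolding linearized_solution_iff
      by (auto simp: d_def phidev_def fq_deriv_def gphi_deriv_def sum_cset_restrict cset_def split: dev.split)
    obtain j where j: "j \<in> cset C c" "y j \<noteq> 0"
      using y(1) by blast
    then have "VPh j \<in> vars C"
      using that by (auto simp: cset_def)
    with ker sol_d have "d (VPh j) = 0"
      by blast
    with j show False
      by (simp add: d_def cset_def)
  qed
  show "nonsingular (cset C QMem) (cset C QMem) (Em C t x)"
    and "nonsingular (cset C Cap) (cset C Cap) (Ec C t x)"
    and "nonsingular (cset C PhiMem) (cset C PhiMem) (Rw C t x)"
    and "nonsingular (cset C Ind) (cset C Ind) (Rl C t x)"
    by (auto intro: charge flux)
qed

lemma sum_cset_cong:
  "(\<And>b. cls C b = c \<Longrightarrow> f b = g b) \<Longrightarrow> sum f (cset C c) = sum g (cset C c)"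
  by (rule sum.cong) (auto simp: cset_def)

lemma no_VLW_loop_if_linearized_kernel_trivial:
  fixes C :: "('n::finite, 'b::finite) circuit"
  assumes adm: "admissible_circuit C"
    and ker: "\<forall>d. linearized_solution C t x d \<longrightarrow> (\<forall>u\<in>vars C. d u = 0)"
    and Rw: "nonsingular (cset C PhiMem) (cset C PhiMem) (Rw C t x)"
    and Rl: "nonsingular (cset C Ind) (cset C Ind) (Rl C t x)"
  shows "\<not> (\<exists>L. VLW_loop C L)"
proof
  assume "\<exists>L. VLW_loop C L"
  then obtain vs es where cyc: "is_cycle C vs es" and VLW: "\<forall>b\<in>set es. cls C b \<in> {VSrc, Ind, PhiMem}"
    unfolding VLW_loop_def is_loop_def by blast
  \<comment> \<open>Circulate a unit current around the loop; the flux increments of the inductive branches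
    are chosen to produce it.\<close>
  define w where "w = cycle_vec C vs es"
  have w0: "w b = 0" if "cls C b \<notin> {VSrc, Ind, PhiMem}" for b
    using VLW that cycle_vec_support unfolding w_def by blast
  have "loop_vec C w"
    unfolding loop_vec_iff w_def using cyc by blast
  then have Dw: "(\<Sum>b\<in>UNIV. Dm C r b * w b) = 0" if "r < rD C" for r
    using adm that loop_vec_orthogonal_cutset_vec[of C w "Dm C r"]
    unfolding admissible_circuit_def reduced_matrix_def by (simp add: mult.commute)
  obtain yw where yw: "\<forall>b\<in>cset C PhiMem. (\<Sum>b'\<in>cset C PhiMem. Rw C t x b b' * yw b') = w b"
    using nonsingular_solvable[OF Rw, of w] by auto
  obtain yl where yl: "\<forall>b\<in>cset C Ind. (\<Sum>b'\<in>cset C Ind. Rl C t x b b' * yl b') = w b"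
    using nonsingular_solvable[OF Rl, of w] by auto
  define d where "d u = (case u of VI b \<Rightarrow> w b
      | VPh b \<Rightarrow> (if cls C b = PhiMem then yw b else if cls C b = Ind then yl b else 0) | _ \<Rightarrow> 0)" for u
  have "(\<Sum>b'\<in>cset C PhiMem. Rw C t x b b' * d (VPh b')) = w b" if "cls C b = PhiMem" for b
    using yw that by (simp add: d_def sum_cset_cong cset_def)
  moreover have "(\<Sum>b'\<in>cset C Ind. Rl C t x b b' * d (VPh b')) = w b" if "cls C b = Ind" for b
    using yl that by (simp add: d_def sum_cset_cong cset_def)
  moreover have "(\<Sum>b'\<in>cset C c. a b' * w b') = 0" if "c \<in> {QMem, CCR}" for a :: "'b \<Rightarrow> real" and c
    using that w0 by (intro sum.neutral) (auto simp: cset_def)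
  ultimately have "linearized_solution C t x d"
    unfolding linearized_solution_iff using w0 Dw
    by (auto simp: d_def qdev_def phidev_def fq_deriv_def gphi_deriv_def split: dev.split)
  with ker have "d (VI (es!0)) = 0"
    by simp
  then have "w (es!0) = 0"
    by (simp add: d_def)
  moreover have "w (es!0) \<noteq> 0"
    using cycle_vec_nth[OF cyc, of 0] cyc unfolding w_def is_cycle_def by simp
  ultimately show False
    by simp
qed

lemma no_ICM_cutset_if_linearized_kernel_trivial:
  fixes C :: "('n::finite, 'b::finite) circuit"
  assumes adm: "admissible_circuit C"
    and ker: "\<forall>d. linearized_solution C t x d \<longrightarrow> (\<forall>u\<in>vars C. d u = 0)"
    and Em: "nonsingular (cset C QMem) (cset C QMem) (Em C t x)"
    and Ec: "nonsingular (cset C Cap) (cset C Cap) (Ec C t x)"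
  shows "\<not> (\<exists>S. ICM_cutset C S)"
proof
  assume "\<exists>S. ICM_cutset C S"
  then obtain S where S: "is_cutset C S" and ICM: "\<forall>b\<in>S. cls C b \<in> {ISrc, Cap, QMem}"
    unfolding ICM_cutset_def by blast
  obtain X where X: "S = cut C X"
    using S by (rule cutset_eq_cut)
  \<comment> \<open>Apply a unit voltage across the cutset; the charge increments of the capacitive branches
    are chosen to produce it.\<close>
  define c where "c = cut_vec C X"
  have c0: "c b = 0" if "cls C b \<notin> {ISrc, Cap, QMem}" for b
    using ICM that X unfolding c_def by (auto simp: cut_vec_eq_0_iff)
  have "cutset_vec C c"
    unfolding cutset_vec_iff c_def using S X by blast
  then have Bc: "(\<Sum>b\<in>UNIV. Bm C r b * c b) = 0" if "r < rB C" for r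
    using adm that loop_vec_orthogonal_cutset_vec[of C "Bm C r" c]
    unfolding admissible_circuit_def reduced_matrix_def by simp
  obtain yq where yq: "\<forall>b\<in>cset C QMem. (\<Sum>b'\<in>cset C QMem. Em C t x b b' * yq b') = c b"
    using nonsingular_solvable[OF Em, of c] by auto
  obtain yc where yc: "\<forall>b\<in>cset C Cap. (\<Sum>b'\<in>cset C Cap. Ec C t x b b' * yc b') = c b"
    using nonsingular_solvable[OF Ec, of c] by auto
  define d where "d u = (case u of VV b \<Rightarrow> c b
      | VQ b \<Rightarrow> (if cls C b = QMem then yq b else if cls C b = Cap then yc b else 0) | _ \<Rightarrow> 0)" for u
  have "(\<Sum>b'\<in>cset C QMem. Em C t x b b' * d (VQ b')) = c b" if "cls C b = QMem" for b
    using yq that by (simp add: d_def sum_cset_cong cset_def)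
  moreover have "(\<Sum>b'\<in>cset C Cap. Ec C t x b b' * d (VQ b')) = c b" if "cls C b = Cap" for b
    using yc that by (simp add: d_def sum_cset_cong cset_def)
  moreover have "(\<Sum>b'\<in>cset C c'. a b' * c b') = 0" if "c' \<in> {PhiMem, VCR}" for a :: "'b \<Rightarrow> real" and c'
    using that c0 by (intro sum.neutral) (auto simp: cset_def)
  ultimately have "linearized_solution C t x d"
    unfolding linearized_solution_iff using c0 Bc
    by (auto simp: d_def qdev_def phidev_def fq_deriv_def gphi_deriv_def split: dev.split)
  then have "d (VV b) = 0" for b
    using ker by simp
  then have "c b = 0" for b
    by (simp add: d_def)
  moreover obtain f where "f \<in> S"
    using cutset_nonempty[OF S] by blast
  then have "c f \<noteq> 0"
    using X unfolding c_def by (simp add: cut_vec_eq_0_iff)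
  ultimately show False
    by simp
qed

lemma linearized_kernel_trivial_iff:
  fixes C :: "('n::finite, 'b::finite) circuit"
  assumes "admissible_circuit C" "R_posdef C" "G_posdef C"
  shows "(\<forall>d. linearized_solution C t x d \<longrightarrow> (\<forall>u\<in>vars C. d u = 0)) \<longleftrightarrow>
           (nonsingular (cset C QMem) (cset C QMem) (Em C t x) \<and>
            nonsingular (cset C Cap) (cset C Cap) (Ec C t x) \<and>
            nonsingular (cset C PhiMem) (cset C PhiMem) (Rw C t x) \<and>
            nonsingular (cset C Ind) (cset C Ind) (Rl C t x)) \<and>
           \<not> (\<exists>L. VLW_loop C L) \<and> \<not> (\<exists>S. ICM_cutset C S)"
  using linearized_solution_trivial[OF assms] nonsingular_if_linearized_kernel_trivial
    no_VLW_loop_if_linearized_kernel_trivial[OF assms(1)]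
    no_ICM_cutset_if_linearized_kernel_trivial[OF assms(1)]
  by meson

theorem theorem2:
  fixes C :: "('n::finite, 'b::finite) circuit" and t :: real and x :: "'b cvar \<Rightarrow> real"
  assumes "admissible_circuit C"
    and "R_posdef C" and "G_posdef C"
    and "equilibrium C t x"
  shows "regular_equilibrium C t x \<longleftrightarrow>
           (nonsingular (cset C QMem) (cset C QMem) (Em C t x) \<and>
            nonsingular (cset C Cap) (cset C Cap) (Ec C t x) \<and>
            nonsingular (cset C PhiMem) (cset C PhiMem) (Rw C t x) \<and>
            nonsingular (cset C Ind) (cset C Ind) (Rl C t x)) \<and>
           \<not> (\<exists>L. VLW_loop C L) \<and> \<not> (\<exists>S. ICM_cutset C S)"
proof -
  have "rB C + rD C \<le> CARD('b)"
    using assms(1) loop_vec_orthogonal_cutset_vec unfolding admissible_circuit_def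
    by (blast intro: reduced_matrices_rank_le)
  then have "card (eqns C) \<le> card (vars C)"
    by (rule card_eqns_le_card_vars)
  moreover have "finite (eqns C)"
    by (simp add: eqns_def)
  ultimately have "regular_equilibrium C t x \<longleftrightarrow>
      (\<forall>d. (\<forall>e\<in>eqns C. (\<Sum>u\<in>vars C. Kmat C t x e u * d u) = 0) \<longrightarrow> (\<forall>u\<in>vars C. d u = 0))"
    using assms(4) nonsingular_iff_kernel_trivial[OF _ finite_vars] unfolding regular_equilibrium_def
    by simp
  also have "\<dots> \<longleftrightarrow> (\<forall>d. linearized_solution C t x d \<longrightarrow> (\<forall>u\<in>vars C. d u = 0))"
    using Kmat_kernel_iff[OF assms(1)] by simp
  also note linearized_kernel_trivial_iff[OF assms(1-3)]
  finally show ?thesis .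
qed

end
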